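(* Let $\Gamma\subset\mathbb{R}^2$ be a lattice, $\Lambda>0$ smooth and $\Gamma$-periodic, and let $F=\sum_{i=0}^4a_ip_1^{4-i}p_2^i$ with smooth $\Gamma$-periodic $a_i$ satisfy $\{H,F\}=0$, $H=\frac{p_1^2+p_2^2}{2\Lambda}$, with $a_3=a_1$ and $a_4=c_2+a_2-a_0$ for a constant $c_2$ (Kolokoltsov relations with $c_1=0$). Define the constants $$a_{11}=\tfrac12\big\langle(2c_2-2a_0+a_2)\Lambda\big\rangle,\quad a_{22}=\tfrac12\langle(2a_0-a_2)\Lambda\rangle,\quad a_{12}=\tfrac12\langle a_1\Lambda\rangle .$$ Let $\lambda$ be a smooth $\Gamma$-periodic solution of $\Delta\lambda=2c_2\Lambda-2a_{11}-2a_{22}$. Then $$\lambda_{xy}(\lambda_{yyyy}-\lambda_{xxxx})+3(\lambda_{yyy}\lambda_{xyy}-\lambda_{xxy}\lambda_{xxx})+2(\lambda_{yy}\lambda_{xyyy}-\lambda_{xx}\lambda_{xxxy})+4a_{22}\lambda_{xyyy}-4a_{11}\lambda_{xxxy}+2a_{12}(\lambda_{yyyy}-\lambda_{xxxx})=0 .$$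
   Context: $\{H,F\}=\sum_{j=1}^2\left(\frac{\partial H}{\partial q^j}\frac{\partial F}{\partial p_j}-\frac{\partial H}{\partial p_j}\frac{\partial F}{\partial q^j}\right)$, $(q^1,q^2)=(x,y)$; so $F$ is a quartic first integral of the geodesic flow of $\Lambda(dx^2+dy^2)$ on $\mathbb{R}^2/\Gamma$. $\langle g\rangle$ denotes the average of a $\Gamma$-periodic function $g$ over a fundamental domain of $\Gamma$. $\Delta=\partial_x^2+\partial_y^2$. *)

theory Defs
  imports "HOL-Analysis.Analysis"
begin

definition dx :: "(real \<Rightarrow> real \<Rightarrow> real) \<Rightarrow> real \<Rightarrow> real \<Rightarrow> real" where
  "dx f = (\<lambda>x y. deriv (\<lambda>t. f t y) x)"

definition dy :: "(real \<Rightarrow> real \<Rightarrow> real) \<Rightarrow> real \<Rightarrow> real \<Rightarrow> real" where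
  "dy f = (\<lambda>x y. deriv (\<lambda>t. f x t) y)"

text \<open>Iterated partial derivative: True = d/dx, False = d/dy, applied right to left.\<close>
fun iter_pd :: "bool list \<Rightarrow> (real \<Rightarrow> real \<Rightarrow> real) \<Rightarrow> real \<Rightarrow> real \<Rightarrow> real" where
  "iter_pd [] f = f"
| "iter_pd (b # bs) f = (if b then dx else dy) (iter_pd bs f)"

definition smooth2 :: "(real \<Rightarrow> real \<Rightarrow> real) \<Rightarrow> bool" where
  "smooth2 f \<longleftrightarrow> (\<forall>bs. continuous_on UNIV (\<lambda>z::real\<times>real. iter_pd bs f (fst z) (snd z))
                     \<and> (\<lambda>z::real\<times>real. iter_pd bs f (fst z) (snd z)) differentiable_on UNIV)"

text \<open>A lattice Gamma = Z(a,b) + Z(c,d) with linearly independent generators.\<close>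
definition lattice_basis :: "real \<Rightarrow> real \<Rightarrow> real \<Rightarrow> real \<Rightarrow> bool" where
  "lattice_basis a b c d \<longleftrightarrow> a * d - b * c \<noteq> 0"

definition gamma_periodic :: "real \<Rightarrow> real \<Rightarrow> real \<Rightarrow> real \<Rightarrow> (real \<Rightarrow> real \<Rightarrow> real) \<Rightarrow> bool" where
  "gamma_periodic a b c d f \<longleftrightarrow>
     (\<forall>x y. f (x + a) (y + b) = f x y \<and> f (x + c) (y + d) = f x y)"

definition fund_domain :: "real \<Rightarrow> real \<Rightarrow> real \<Rightarrow> real \<Rightarrow> (real \<times> real) set" where
  "fund_domain a b c d = {(s * a + t * c, s * b + t * d) | s t. 0 \<le> s \<and> s \<le> 1 \<and> 0 \<le> t \<and> t \<le> 1}"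

definition avg :: "real \<Rightarrow> real \<Rightarrow> real \<Rightarrow> real \<Rightarrow> (real \<Rightarrow> real \<Rightarrow> real) \<Rightarrow> real" where
  "avg a b c d g = integral (fund_domain a b c d) (\<lambda>z. g (fst z) (snd z))
                   / measure lebesgue (fund_domain a b c d)"

text \<open>Canonical Poisson bracket of functions of (q1,q2,p1,p2) = (x,y,p1,p2).\<close>
definition poisson ::
  "(real \<Rightarrow> real \<Rightarrow> real \<Rightarrow> real \<Rightarrow> real) \<Rightarrow> (real \<Rightarrow> real \<Rightarrow> real \<Rightarrow> real \<Rightarrow> real)
     \<Rightarrow> real \<Rightarrow> real \<Rightarrow> real \<Rightarrow> real \<Rightarrow> real" where
  "poisson H F x y p1 p2 =
     deriv (\<lambda>t. H t y p1 p2) x * deriv (\<lambda>t. F x y t p2) p1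
   - deriv (\<lambda>t. H x y t p2) p1 * deriv (\<lambda>t. F t y p1 p2) x
   + deriv (\<lambda>t. H x t p1 p2) y * deriv (\<lambda>t. F x y p1 t) p2
   - deriv (\<lambda>t. H x y p1 t) p2 * deriv (\<lambda>t. F x t p1 p2) y"

end

theory Submission
  imports Defs
begin

text \<open>The Killing equations of the quartic integral, together with Kolokoltsov's relations, say
  that the symmetric matrix K with entries K11 = (2 c2 - 2 a0 + a2) \<Lambda>, K12 = a1 \<Lambda>,
  K22 = (2 a0 - a2) \<Lambda> is divergence free; its trace is 2 c2 \<Lambda>. Hence u = lam_xx - K11 + 2 a11 and
  v = lam_xy - K12 + 2 a12 form a Cauchy-Riemann pair. Both are periodic with mean zero, and the
  Dirichlet energy of u is a sum of derivatives of periodic functions, so u and v vanish: K is the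
  Hessian of lam shifted by the constant matrix 2 (a_ij). The Killing equations also express the
  gradient of a0 \<Lambda>^2 through \<Lambda> and K. The symmetry of its second derivatives, after eliminating
  the derivatives of \<Lambda> by means of Laplace(lam) = 2 c2 \<Lambda> - 2 a11 - 2 a22, is the asserted
  identity.\<close>

section \<open>Partial derivatives in the plane\<close>

definition continuous2 :: "(real \<Rightarrow> real \<Rightarrow> real) \<Rightarrow> bool" where
  "continuous2 g \<longleftrightarrow> continuous_on UNIV (\<lambda>z::real \<times> real. g (fst z) (snd z))"

definition C1_partials ::
  "(real \<Rightarrow> real \<Rightarrow> real) \<Rightarrow> (real \<Rightarrow> real \<Rightarrow> real) \<Rightarrow> (real \<Rightarrow> real \<Rightarrow> real) \<Rightarrow> bool" where
  "C1_partials f fx fy \<longleftrightarrow>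
     (\<forall>x y. ((\<lambda>z::real \<times> real. f (fst z) (snd z)) has_derivative
              (\<lambda>h. fx x y * fst h + fy x y * snd h)) (at (x, y)))
     \<and> continuous2 f \<and> continuous2 fx \<and> continuous2 fy"

lemma continuous2_add: "continuous2 f \<Longrightarrow> continuous2 g \<Longrightarrow> continuous2 (\<lambda>x y. f x y + g x y)"
  and continuous2_diff: "continuous2 f \<Longrightarrow> continuous2 g \<Longrightarrow> continuous2 (\<lambda>x y. f x y - g x y)"
  and continuous2_mult: "continuous2 f \<Longrightarrow> continuous2 g \<Longrightarrow> continuous2 (\<lambda>x y. f x y * g x y)"
  and continuous2_const: "continuous2 (\<lambda>x y. k)"
  unfolding continuous2_def by (auto intro!: continuous_intros)

lemma linear_real_pair:
  fixes D :: "real \<times> real \<Rightarrow> real"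
  assumes "linear D"
  shows "D h = fst h * D (1, 0) + snd h * D (0, 1)"
proof -
  have "D h = D (fst h *\<^sub>R (1, 0) + snd h *\<^sub>R (0, 1))" by simp
  also have "\<dots> = fst h * D (1, 0) + snd h * D (0, 1)"
    by (simp only: linear_add[OF assms] linear_scale[OF assms]) simp
  finally show ?thesis .
qed

lemma has_derivative_partials:
  assumes D: "((\<lambda>z::real \<times> real. f (fst z) (snd z)) has_derivative D) (at (x, y))"
  shows "((\<lambda>t. f t y) has_real_derivative D (1, 0)) (at x)"
    and "((\<lambda>t. f x t) has_real_derivative D (0, 1)) (at y)"
proof -
  have lin: "linear D" using D by (rule has_derivative_linear)
  have Dx: "D (h, 0) = D (1, 0) * h" and Dy: "D (0, h) = D (0, 1) * h" for h
    using linear_real_pair[OF lin, of "(h, 0)"] linear_real_pair[OF lin, of "(0, h)"] by simp_all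
  have "((\<lambda>t. (t, y)) has_derivative (\<lambda>h. (h, 0))) (at x)"
    by (auto intro!: derivative_eq_intros)
  from has_derivative_compose[OF this D]
  have "((\<lambda>t. f t y) has_derivative (\<lambda>h. D (h, 0))) (at x)" by simp
  then show "((\<lambda>t. f t y) has_real_derivative D (1, 0)) (at x)"
    unfolding has_field_derivative_def
    by (rule has_derivative_eq_rhs) (intro ext, metis Dx mult.commute)
  have "((\<lambda>t. (x, t)) has_derivative (\<lambda>h. (0, h))) (at y)"
    by (auto intro!: derivative_eq_intros)
  from has_derivative_compose[OF this D]
  have "((\<lambda>t. f x t) has_derivative (\<lambda>h. D (0, h))) (at y)" by simp
  then show "((\<lambda>t. f x t) has_real_derivative D (0, 1)) (at y)"
    unfolding has_field_derivative_def
    by (rule has_derivative_eq_rhs) (intro ext, metis Dy mult.commute)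
qed

lemma C1_partials_DERIV_x:
  "C1_partials f fx fy \<Longrightarrow> ((\<lambda>t. f t y) has_real_derivative fx x y) (at x)"
  using has_derivative_partials(1)[of f "\<lambda>h. fx x y * fst h + fy x y * snd h" x y]
  by (simp add: C1_partials_def)

lemma C1_partials_DERIV_y:
  "C1_partials f fx fy \<Longrightarrow> ((\<lambda>t. f x t) has_real_derivative fy x y) (at y)"
  using has_derivative_partials(2)[of f "\<lambda>h. fx x y * fst h + fy x y * snd h" x y]
  by (simp add: C1_partials_def)

lemma C1_partials_dx: "C1_partials f fx fy \<Longrightarrow> dx f = fx"
  and C1_partials_dy: "C1_partials f fx fy \<Longrightarrow> dy f = fy"
  by (simp_all add: fun_eq_iff dx_def dy_def DERIV_imp_deriv C1_partials_DERIV_x C1_partials_DERIV_y)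

lemma iter_pd_append: "iter_pd (bs @ [b]) f = iter_pd bs ((if b then dx else dy) f)"
  by (induction bs) auto

lemma smooth2_dx: "smooth2 f \<Longrightarrow> smooth2 (dx f)"
  unfolding smooth2_def using iter_pd_append[of _ True f] by metis

lemma smooth2_dy: "smooth2 f \<Longrightarrow> smooth2 (dy f)"
  unfolding smooth2_def using iter_pd_append[of _ False f] by (metis (full_types))

lemma smooth2_continuous2: "smooth2 f \<Longrightarrow> continuous2 f"
  unfolding smooth2_def continuous2_def by (metis iter_pd.simps(1))

lemma smooth2_C1_partials:
  assumes f: "smooth2 f"
  shows "C1_partials f (dx f) (dy f)"
proof -
  have "((\<lambda>z::real \<times> real. f (fst z) (snd z)) has_derivative
          (\<lambda>h. dx f x y * fst h + dy f x y * snd h)) (at (x, y))" for x y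
  proof -
    have "(\<lambda>z::real \<times> real. f (fst z) (snd z)) differentiable (at (x, y))"
      using f unfolding smooth2_def
      by (metis differentiable_on_def iter_pd.simps(1) UNIV_I at_within_open open_UNIV)
    then obtain D where D: "((\<lambda>z::real \<times> real. f (fst z) (snd z)) has_derivative D) (at (x, y))"
      by (auto simp: differentiable_def)
    have partials: "dx f x y = D (1, 0)" "dy f x y = D (0, 1)"
      using has_derivative_partials[OF D] by (simp_all add: dx_def dy_def DERIV_imp_deriv)
    have "D = (\<lambda>h. dx f x y * fst h + dy f x y * snd h)"
    proof
      fix h
      show "D h = dx f x y * fst h + dy f x y * snd h"
        using linear_real_pair[OF has_derivative_linear[OF D], of h] partials by (simp add: mult.commute)
    qed
    with D show ?thesis by simp
  qed
  then show ?thesis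
    using smooth2_continuous2[OF f] smooth2_continuous2[OF smooth2_dx[OF f]]
      smooth2_continuous2[OF smooth2_dy[OF f]]
    by (simp add: C1_partials_def)
qed

lemma C1_partials_add:
  assumes f: "C1_partials f fx fy" and g: "C1_partials g gx gy"
  shows "C1_partials (\<lambda>x y. f x y + g x y) (\<lambda>x y. fx x y + gx x y) (\<lambda>x y. fy x y + gy x y)"
  unfolding C1_partials_def
proof (intro conjI allI)
  fix x y
  show "((\<lambda>z::real \<times> real. f (fst z) (snd z) + g (fst z) (snd z)) has_derivative
          (\<lambda>h. (fx x y + gx x y) * fst h + (fy x y + gy x y) * snd h)) (at (x, y))"
    using has_derivative_add[OF f[unfolded C1_partials_def, THEN conjunct1, rule_format, of x y]
                                g[unfolded C1_partials_def, THEN conjunct1, rule_format, of x y]]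
    by (rule has_derivative_eq_rhs) (simp add: fun_eq_iff algebra_simps)
qed (use f g in \<open>auto simp: C1_partials_def intro!: continuous2_add\<close>)

lemma C1_partials_mult:
  assumes f: "C1_partials f fx fy" and g: "C1_partials g gx gy"
  shows "C1_partials (\<lambda>x y. f x y * g x y)
           (\<lambda>x y. fx x y * g x y + f x y * gx x y) (\<lambda>x y. fy x y * g x y + f x y * gy x y)"
  unfolding C1_partials_def
proof (intro conjI allI)
  fix x y
  show "((\<lambda>z::real \<times> real. f (fst z) (snd z) * g (fst z) (snd z)) has_derivative
          (\<lambda>h. (fx x y * g x y + f x y * gx x y) * fst h + (fy x y * g x y + f x y * gy x y) * snd h))
          (at (x, y))"
    using has_derivative_mult[OF f[unfolded C1_partials_def, THEN conjunct1, rule_format, of x y]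
                                 g[unfolded C1_partials_def, THEN conjunct1, rule_format, of x y]]
    by (rule has_derivative_eq_rhs) (simp add: fun_eq_iff algebra_simps)
qed (use f g in \<open>auto simp: C1_partials_def intro!: continuous2_add continuous2_mult\<close>)

text \<open>Sums of products of smooth functions are closed under partial derivatives, which yields
  the smoothness of sums and products.\<close>

inductive_set product_sums :: "(real \<Rightarrow> real \<Rightarrow> real) set" where
  product: "smooth2 f \<Longrightarrow> smooth2 g \<Longrightarrow> (\<lambda>x y. f x y * g x y) \<in> product_sums"
| sum: "h1 \<in> product_sums \<Longrightarrow> h2 \<in> product_sums \<Longrightarrow> (\<lambda>x y. h1 x y + h2 x y) \<in> product_sums"

lemma product_sums_C1_partials:
  "h \<in> product_sums \<Longrightarrow> \<exists>hx hy. C1_partials h hx hy \<and> hx \<in> product_sums \<and> hy \<in> product_sums"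
proof (induction rule: product_sums.induct)
  case (product f g)
  have "(\<lambda>x y. dx f x y * g x y + f x y * dx g x y) \<in> product_sums"
    and "(\<lambda>x y. dy f x y * g x y + f x y * dy g x y) \<in> product_sums"
    using product by (simp_all add: product_sums.product product_sums.sum smooth2_dx smooth2_dy)
  then show ?case
    using C1_partials_mult[OF smooth2_C1_partials[OF product(1)] smooth2_C1_partials[OF product(2)]]
    by blast
next
  case (sum h1 h2)
  then show ?case using C1_partials_add by (blast intro: product_sums.intros)
qed

lemma product_sums_smooth2:
  assumes "h \<in> product_sums"
  shows "smooth2 h"
proof -
  have "continuous_on UNIV (\<lambda>z::real \<times> real. iter_pd bs h (fst z) (snd z))
      \<and> (\<lambda>z::real \<times> real. iter_pd bs h (fst z) (snd z)) differentiable_on UNIV"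
    if "h \<in> product_sums" for bs h
    using that
  proof (induction bs arbitrary: h rule: rev_induct)
    case Nil
    then obtain hx hy where "C1_partials h hx hy" using product_sums_C1_partials by blast
    then show ?case
      unfolding C1_partials_def continuous2_def differentiable_on_def differentiable_def
      by (auto intro: has_derivative_at_withinI)
  next
    case (snoc b bs)
    have "(if b then dx else dy) h \<in> product_sums"
      using product_sums_C1_partials[OF snoc.prems] C1_partials_dx C1_partials_dy by auto
    then show ?case using snoc.IH by (simp add: iter_pd_append)
  qed
  with assms show ?thesis unfolding smooth2_def by blast
qed

lemma iter_pd_const: "iter_pd bs (\<lambda>x y. k) = (\<lambda>x y. if bs = [] then k else 0)"
proof (induction bs)
  case (Cons b bs)
  then show ?case by (cases bs) (auto simp: dx_def dy_def fun_eq_iff)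
qed simp

lemma smooth2_const: "smooth2 (\<lambda>x y. k)"
  unfolding smooth2_def iter_pd_const by simp

lemma smooth2_mult: "smooth2 f \<Longrightarrow> smooth2 g \<Longrightarrow> smooth2 (\<lambda>x y. f x y * g x y)"
  by (rule product_sums_smooth2, rule product_sums.product)

lemma smooth2_add: "smooth2 f \<Longrightarrow> smooth2 g \<Longrightarrow> smooth2 (\<lambda>x y. f x y + g x y)"
  using product_sums.sum[OF product_sums.product product_sums.product, OF _ smooth2_const[of 1] _ smooth2_const[of 1]]
  by (simp add: product_sums_smooth2)

lemma smooth2_cmult: "smooth2 f \<Longrightarrow> smooth2 (\<lambda>x y. k * f x y)"
  using smooth2_mult[OF smooth2_const[of k]] by simp

lemma smooth2_diff: "smooth2 f \<Longrightarrow> smooth2 g \<Longrightarrow> smooth2 (\<lambda>x y. f x y - g x y)"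
  using smooth2_add[OF _ smooth2_cmult[of g "-1"]] by simp

lemma dx_add: "smooth2 f \<Longrightarrow> smooth2 g \<Longrightarrow> dx (\<lambda>x y. f x y + g x y) = (\<lambda>x y. dx f x y + dx g x y)"
  by (rule C1_partials_dx, rule C1_partials_add; rule smooth2_C1_partials)

lemma dy_add: "smooth2 f \<Longrightarrow> smooth2 g \<Longrightarrow> dy (\<lambda>x y. f x y + g x y) = (\<lambda>x y. dy f x y + dy g x y)"
  by (rule C1_partials_dy, rule C1_partials_add; rule smooth2_C1_partials)

lemma dx_mult:
  "smooth2 f \<Longrightarrow> smooth2 g \<Longrightarrow> dx (\<lambda>x y. f x y * g x y) = (\<lambda>x y. dx f x y * g x y + f x y * dx g x y)"
  by (rule C1_partials_dx, rule C1_partials_mult; rule smooth2_C1_partials)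

lemma dy_mult:
  "smooth2 f \<Longrightarrow> smooth2 g \<Longrightarrow> dy (\<lambda>x y. f x y * g x y) = (\<lambda>x y. dy f x y * g x y + f x y * dy g x y)"
  by (rule C1_partials_dy, rule C1_partials_mult; rule smooth2_C1_partials)

lemma dx_const: "dx (\<lambda>x y. k) = (\<lambda>x y. 0)"
  and dy_const: "dy (\<lambda>x y. k) = (\<lambda>x y. 0)"
  by (simp_all add: dx_def dy_def)

lemma dx_cmult: "smooth2 f \<Longrightarrow> dx (\<lambda>x y. k * f x y) = (\<lambda>x y. k * dx f x y)"
  and dy_cmult: "smooth2 f \<Longrightarrow> dy (\<lambda>x y. k * f x y) = (\<lambda>x y. k * dy f x y)"
  using dx_mult[OF smooth2_const[of k]] dy_mult[OF smooth2_const[of k]] by (simp_all add: dx_const dy_const)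

lemma dx_diff:
  assumes "smooth2 f" "smooth2 g"
  shows "dx (\<lambda>x y. f x y - g x y) = (\<lambda>x y. dx f x y - dx g x y)"
  using dx_add[OF assms(1) smooth2_cmult[OF assms(2), of "-1"]] dx_cmult[OF assms(2), of "-1"] by simp

lemma dy_diff:
  assumes "smooth2 f" "smooth2 g"
  shows "dy (\<lambda>x y. f x y - g x y) = (\<lambda>x y. dy f x y - dy g x y)"
  using dy_add[OF assms(1) smooth2_cmult[OF assms(2), of "-1"]] dy_cmult[OF assms(2), of "-1"] by simp

lemmas smooth2_rules = smooth2_dx smooth2_dy smooth2_add smooth2_diff smooth2_mult smooth2_cmult smooth2_const
lemmas partial_rules = dx_add dy_add dx_diff dy_diff dx_mult dy_mult dx_cmult dy_cmult dx_const dy_const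

lemma continuous2_near:
  assumes "continuous2 g" "e > 0"
  obtains \<delta> where "\<delta> > 0" "\<And>p q. \<bar>p - x\<bar> < \<delta> \<Longrightarrow> \<bar>q - y\<bar> < \<delta> \<Longrightarrow> \<bar>g p q - g x y\<bar> < e"
proof -
  have "\<exists>\<delta>>0. \<forall>z. dist z (x, y) < \<delta> \<longrightarrow> dist (g (fst z) (snd z)) (g x y) < e"
    using assms unfolding continuous2_def continuous_on_iff by (metis UNIV_I fst_conv snd_conv)
  then obtain \<delta> where \<delta>: "\<delta> > 0" "\<And>z. dist z (x, y) < \<delta> \<Longrightarrow> dist (g (fst z) (snd z)) (g x y) < e"
    by blast
  show ?thesis
  proof
    show "\<delta> / 2 > 0" using \<delta> by simp
    fix p q assume "\<bar>p - x\<bar> < \<delta> / 2" "\<bar>q - y\<bar> < \<delta> / 2"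
    then have "dist (p, q) (x, y) < \<delta>"
      using sqrt_sum_squares_le_sum_abs[of "\<bar>p - x\<bar>" "\<bar>q - y\<bar>"]
      by (simp add: dist_Pair_Pair dist_real_def)
    then show "\<bar>g p q - g x y\<bar> < e" using \<delta>(2)[of "(p, q)"] by (simp add: dist_real_def)
  qed
qed

text \<open>Clairaut: compare the two ways of applying the mean value theorem twice to the second
  difference of f over a small square.\<close>

lemma clairaut:
  assumes f: "C1_partials f fx fy" and fx: "C1_partials fx fxx fxy" and fy: "C1_partials fy fyx fyy"
  shows "fxy x y = fyx x y"
proof (rule ccontr)
  assume ne: "fxy x y \<noteq> fyx x y"
  define e where "e = \<bar>fxy x y - fyx x y\<bar> / 2"
  have e: "e > 0" using ne by (simp add: e_def)
  have "continuous2 fxy" "continuous2 fyx" using fx fy by (simp_all add: C1_partials_def)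
  obtain \<delta>1 where \<delta>1: "\<delta>1 > 0" "\<And>p q. \<bar>p - x\<bar> < \<delta>1 \<Longrightarrow> \<bar>q - y\<bar> < \<delta>1 \<Longrightarrow> \<bar>fxy p q - fxy x y\<bar> < e"
    using continuous2_near[OF \<open>continuous2 fxy\<close> e] by blast
  obtain \<delta>2 where \<delta>2: "\<delta>2 > 0" "\<And>p q. \<bar>p - x\<bar> < \<delta>2 \<Longrightarrow> \<bar>q - y\<bar> < \<delta>2 \<Longrightarrow> \<bar>fyx p q - fyx x y\<bar> < e"
    using continuous2_near[OF \<open>continuous2 fyx\<close> e] by blast
  define k where "k = min \<delta>1 \<delta>2 / 2"
  have k: "k > 0" "k < \<delta>1" "k < \<delta>2" using \<delta>1 \<delta>2 by (auto simp: k_def)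
  define D where "D = f (x + k) (y + k) - f (x + k) y - f x (y + k) + f x y"
  have "\<exists>\<xi>. x < \<xi> \<and> \<xi> < x + k \<and> (\<lambda>t. f t (y + k) - f t y) (x + k) - (\<lambda>t. f t (y + k) - f t y) x
          = (x + k - x) * (fx \<xi> (y + k) - fx \<xi> y)"
    by (rule MVT2) (use k in \<open>auto intro!: derivative_eq_intros C1_partials_DERIV_x[OF f]\<close>)
  then obtain \<xi> where \<xi>: "x < \<xi>" "\<xi> < x + k" "D = k * (fx \<xi> (y + k) - fx \<xi> y)"
    by (auto simp: D_def)
  have "\<exists>\<eta>. y < \<eta> \<and> \<eta> < y + k \<and> fx \<xi> (y + k) - fx \<xi> y = (y + k - y) * fxy \<xi> \<eta>"
    by (rule MVT2) (use k in \<open>auto intro!: C1_partials_DERIV_y[OF fx]\<close>)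
  then obtain \<eta> where \<eta>: "y < \<eta>" "\<eta> < y + k" "D = k * (k * fxy \<xi> \<eta>)"
    using \<xi> by auto
  have "\<exists>\<eta>'. y < \<eta>' \<and> \<eta>' < y + k \<and> (\<lambda>s. f (x + k) s - f x s) (y + k) - (\<lambda>s. f (x + k) s - f x s) y
          = (y + k - y) * (fy (x + k) \<eta>' - fy x \<eta>')"
    by (rule MVT2) (use k in \<open>auto intro!: derivative_eq_intros C1_partials_DERIV_y[OF f]\<close>)
  then obtain \<eta>' where \<eta>': "y < \<eta>'" "\<eta>' < y + k" "D = k * (fy (x + k) \<eta>' - fy x \<eta>')"
    by (auto simp: D_def algebra_simps)
  have "\<exists>\<xi>'. x < \<xi>' \<and> \<xi>' < x + k \<and> fy (x + k) \<eta>' - fy x \<eta>' = (x + k - x) * fyx \<xi>' \<eta>'"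
    by (rule MVT2) (use k in \<open>auto intro!: C1_partials_DERIV_x[OF fy]\<close>)
  then obtain \<xi>' where \<xi>': "x < \<xi>'" "\<xi>' < x + k" "D = k * (k * fyx \<xi>' \<eta>')"
    using \<eta>' by auto
  have "fxy \<xi> \<eta> = fyx \<xi>' \<eta>'" using \<eta>(3) \<xi>'(3) k(1) by simp
  moreover have "\<bar>fxy \<xi> \<eta> - fxy x y\<bar> < e" using \<delta>1(2) \<xi> \<eta> k by auto
  moreover have "\<bar>fyx \<xi>' \<eta>' - fyx x y\<bar> < e" using \<delta>2(2) \<xi>' \<eta>' k by auto
  ultimately have "\<bar>fxy x y - fyx x y\<bar> < 2 * e" by linarith
  then show False by (simp add: e_def)
qed

lemma smooth2_dx_dy_commute: "smooth2 f \<Longrightarrow> dy (dx f) = dx (dy f)"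
  by (intro ext clairaut[of f "dx f" "dy f" "dx (dx f)" "dy (dx f)" "dx (dy f)" "dy (dy f)"])
    (simp_all add: smooth2_C1_partials smooth2_dx smooth2_dy)

lemma constant_if_partials_vanish:
  assumes u: "smooth2 u" and "\<And>x y. dx u x y = 0" and "\<And>x y. dy u x y = 0"
  shows "u x y = u 0 0"
proof -
  note u' = smooth2_C1_partials[OF u]
  have "u x y = u 0 y"
    by (rule DERIV_isconst_all[of "\<lambda>t. u t y"]) (use C1_partials_DERIV_x[OF u'] assms(2) in metis)
  also have "\<dots> = u 0 0"
    by (rule DERIV_isconst_all[of "\<lambda>t. u 0 t"]) (use C1_partials_DERIV_y[OF u'] assms(3) in metis)
  finally show ?thesis .
qed

section \<open>Integration over a lattice cell\<close>

definition lborel_substitution :: "(real \<times> real \<Rightarrow> real \<times> real) \<Rightarrow> real \<Rightarrow> bool" where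
  "lborel_substitution \<phi> k \<longleftrightarrow> 0 \<le> k \<and> \<phi> \<in> borel_measurable borel \<and>
     (\<forall>h::real \<times> real \<Rightarrow> ennreal. h \<in> borel_measurable borel \<longrightarrow>
        (\<integral>\<^sup>+z. h (\<phi> z) \<partial>lborel) * ennreal k = (\<integral>\<^sup>+z. h z \<partial>lborel))"

lemma lborel_substitution_comp:
  assumes \<phi>: "lborel_substitution \<phi> k" and \<psi>: "lborel_substitution \<psi> l"
  shows "lborel_substitution (\<lambda>z. \<phi> (\<psi> z)) (k * l)"
  unfolding lborel_substitution_def
proof (intro conjI allI impI)
  show "0 \<le> k * l" using \<phi> \<psi> by (simp add: lborel_substitution_def)
  have m\<phi>: "\<phi> \<in> borel_measurable borel" and m\<psi>: "\<psi> \<in> borel_measurable borel"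
    using \<phi> \<psi> by (auto simp: lborel_substitution_def)
  show "(\<lambda>z. \<phi> (\<psi> z)) \<in> borel_measurable borel"
    using measurable_compose[OF m\<psi> m\<phi>] by (simp add: o_def)
  fix h :: "real \<times> real \<Rightarrow> ennreal" assume h: "h \<in> borel_measurable borel"
  have h\<phi>: "(\<lambda>z. h (\<phi> z)) \<in> borel_measurable borel"
    using measurable_compose[OF m\<phi> h] by (simp add: o_def)
  have "(\<integral>\<^sup>+z. h (\<phi> (\<psi> z)) \<partial>lborel) * ennreal (k * l)
      = ((\<integral>\<^sup>+z. (\<lambda>w. h (\<phi> w)) (\<psi> z) \<partial>lborel) * ennreal l) * ennreal k"
    using \<phi> \<psi> by (simp add: lborel_substitution_def ennreal_mult mult_ac)
  also have "\<dots> = (\<integral>\<^sup>+z. h (\<phi> z) \<partial>lborel) * ennreal k"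
  proof -
    have "(\<integral>\<^sup>+z. (\<lambda>w. h (\<phi> w)) (\<psi> z) \<partial>lborel) * ennreal l = (\<integral>\<^sup>+z. (\<lambda>w. h (\<phi> w)) z \<partial>lborel)"
      using \<psi> h\<phi> unfolding lborel_substitution_def by blast
    then show ?thesis by simp
  qed
  also have "\<dots> = (\<integral>\<^sup>+z. h z \<partial>lborel)"
    using \<phi> h by (simp add: lborel_substitution_def)
  finally show "(\<integral>\<^sup>+z. h (\<phi> (\<psi> z)) \<partial>lborel) * ennreal (k * l) = (\<integral>\<^sup>+z. h z \<partial>lborel)" .
qed

lemma lborel_substitution_affine_fst:
  assumes "\<alpha> \<noteq> 0"
  shows "lborel_substitution (\<lambda>z. (\<alpha> * fst z + k * snd z, snd z)) \<bar>\<alpha>\<bar>"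
  unfolding lborel_substitution_def
proof (intro conjI allI impI)
  show \<phi>: "(\<lambda>z::real \<times> real. (\<alpha> * fst z + k * snd z, snd z)) \<in> borel_measurable borel"
    by (intro borel_measurable_continuous_onI continuous_intros)
  fix h :: "real \<times> real \<Rightarrow> ennreal" assume h[measurable]: "h \<in> borel_measurable borel"
  have h\<phi>: "(\<lambda>z. h (\<alpha> * fst z + k * snd z, snd z)) \<in> borel_measurable borel"
    using measurable_compose[OF \<phi> h] by (simp add: o_def)
  have "(\<integral>\<^sup>+z. h (\<alpha> * fst z + k * snd z, snd z) \<partial>lborel) * ennreal \<bar>\<alpha>\<bar>
      = (\<integral>\<^sup>+z. h (\<alpha> * fst z + k * snd z, snd z) \<partial>(lborel \<Otimes>\<^sub>M lborel)) * ennreal \<bar>\<alpha>\<bar>"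
    by (simp add: lborel_prod)
  also have "\<dots> = (\<integral>\<^sup>+y. (\<integral>\<^sup>+x. h (\<alpha> * x + k * y, y) \<partial>lborel) * ennreal \<bar>\<alpha>\<bar> \<partial>lborel)"
    by (subst lborel_pair.nn_integral_snd[symmetric])
      (auto simp: lborel_prod h\<phi> intro!: nn_integral_multc[symmetric])
  also have "\<dots> = (\<integral>\<^sup>+y. (\<integral>\<^sup>+x. h (x, y) \<partial>lborel) \<partial>lborel)"
  proof (rule nn_integral_cong)
    fix y :: real
    have "(\<lambda>x. h (x, y)) \<in> borel_measurable borel" by measurable
    from nn_integral_real_affine[OF this assms, of "k * y"]
    show "(\<integral>\<^sup>+x. h (\<alpha> * x + k * y, y) \<partial>lborel) * ennreal \<bar>\<alpha>\<bar> = (\<integral>\<^sup>+x. h (x, y) \<partial>lborel)"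
      by (simp add: mult.commute add.commute)
  qed
  also have "\<dots> = (\<integral>\<^sup>+z. h z \<partial>(lborel \<Otimes>\<^sub>M lborel))"
    by (subst lborel_pair.nn_integral_snd[symmetric]) (auto simp: lborel_prod)
  also have "\<dots> = (\<integral>\<^sup>+z. h z \<partial>lborel)" by (simp add: lborel_prod)
  finally show "(\<integral>\<^sup>+z. h (\<alpha> * fst z + k * snd z, snd z) \<partial>lborel) * ennreal \<bar>\<alpha>\<bar> = (\<integral>\<^sup>+z. h z \<partial>lborel)" .
qed simp

lemma lborel_substitution_affine_snd:
  assumes "\<alpha> \<noteq> 0"
  shows "lborel_substitution (\<lambda>z. (fst z, k * fst z + \<alpha> * snd z)) \<bar>\<alpha>\<bar>"
  unfolding lborel_substitution_def
proof (intro conjI allI impI)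
  show \<phi>: "(\<lambda>z::real \<times> real. (fst z, k * fst z + \<alpha> * snd z)) \<in> borel_measurable borel"
    by (intro borel_measurable_continuous_onI continuous_intros)
  fix h :: "real \<times> real \<Rightarrow> ennreal" assume h[measurable]: "h \<in> borel_measurable borel"
  have h\<phi>: "(\<lambda>z. h (fst z, k * fst z + \<alpha> * snd z)) \<in> borel_measurable borel"
    using measurable_compose[OF \<phi> h] by (simp add: o_def)
  have "(\<integral>\<^sup>+z. h (fst z, k * fst z + \<alpha> * snd z) \<partial>lborel) * ennreal \<bar>\<alpha>\<bar>
      = (\<integral>\<^sup>+z. h (fst z, k * fst z + \<alpha> * snd z) \<partial>(lborel \<Otimes>\<^sub>M lborel)) * ennreal \<bar>\<alpha>\<bar>"
    by (simp add: lborel_prod)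
  also have "\<dots> = (\<integral>\<^sup>+x. (\<integral>\<^sup>+y. h (x, k * x + \<alpha> * y) \<partial>lborel) * ennreal \<bar>\<alpha>\<bar> \<partial>lborel)"
    by (subst lborel.nn_integral_fst[symmetric])
      (auto simp: lborel_prod h\<phi> intro!: nn_integral_multc[symmetric])
  also have "\<dots> = (\<integral>\<^sup>+x. (\<integral>\<^sup>+y. h (x, y) \<partial>lborel) \<partial>lborel)"
  proof (rule nn_integral_cong)
    fix x :: real
    have "(\<lambda>y. h (x, y)) \<in> borel_measurable borel" by measurable
    from nn_integral_real_affine[OF this assms, of "k * x"]
    show "(\<integral>\<^sup>+y. h (x, k * x + \<alpha> * y) \<partial>lborel) * ennreal \<bar>\<alpha>\<bar> = (\<integral>\<^sup>+y. h (x, y) \<partial>lborel)"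
      by (simp add: mult.commute)
  qed
  also have "\<dots> = (\<integral>\<^sup>+z. h z \<partial>(lborel \<Otimes>\<^sub>M lborel))"
    by (subst lborel.nn_integral_fst[symmetric]) (auto simp: lborel_prod)
  also have "\<dots> = (\<integral>\<^sup>+z. h z \<partial>lborel)" by (simp add: lborel_prod)
  finally show "(\<integral>\<^sup>+z. h (fst z, k * fst z + \<alpha> * snd z) \<partial>lborel) * ennreal \<bar>\<alpha>\<bar> = (\<integral>\<^sup>+z. h z \<partial>lborel)" .
qed simp

definition lattice_map :: "real \<Rightarrow> real \<Rightarrow> real \<Rightarrow> real \<Rightarrow> real \<times> real \<Rightarrow> real \<times> real" where
  "lattice_map a b c d z = (fst z * a + snd z * c, fst z * b + snd z * d)"

text \<open>Gaussian elimination: if a is nonzero, the lattice map is an affine map in the first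
  coordinate followed by one in the second; otherwise precompose a shear.\<close>

lemma lborel_substitution_lattice_map:
  assumes det: "a * d - b * c \<noteq> 0"
  shows "lborel_substitution (lattice_map a b c d) \<bar>a * d - b * c\<bar>"
proof -
  have triangular: "lborel_substitution (lattice_map a b c d) \<bar>a * d - b * c\<bar>"
    if "a \<noteq> 0" "a * d - b * c \<noteq> 0" for a b c d :: real
  proof -
    have "lborel_substitution (\<lambda>z. (\<lambda>z. (fst z, (b / a) * fst z + ((a * d - b * c) / a) * snd z))
            ((\<lambda>z. (a * fst z + c * snd z, snd z)) z)) (\<bar>(a * d - b * c) / a\<bar> * \<bar>a\<bar>)"
      using that by (intro lborel_substitution_comp lborel_substitution_affine_fst
          lborel_substitution_affine_snd) auto
    moreover have "(\<lambda>z. (\<lambda>z. (fst z, (b / a) * fst z + ((a * d - b * c) / a) * snd z))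
            ((\<lambda>z. (a * fst z + c * snd z, snd z)) z)) = lattice_map a b c d"
      using that by (auto simp: fun_eq_iff lattice_map_def field_simps)
    ultimately show ?thesis using that by (simp add: abs_divide)
  qed
  show ?thesis
  proof (cases "a = 0")
    case True
    then have "c \<noteq> 0" using det by auto
    with True det have "lborel_substitution (\<lambda>z. lattice_map (a + c) (b + d) c d ((\<lambda>z. (fst z, (-1) * fst z + 1 * snd z)) z))
        (\<bar>(a + c) * d - (b + d) * c\<bar> * \<bar>1\<bar>)"
      by (intro lborel_substitution_comp triangular lborel_substitution_affine_snd)
        (auto simp: algebra_simps)
    moreover have "(\<lambda>z. lattice_map (a + c) (b + d) c d ((\<lambda>z. (fst z, (-1) * fst z + 1 * snd z)) z))
        = lattice_map a b c d"
      by (auto simp: fun_eq_iff lattice_map_def algebra_simps)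
    ultimately show ?thesis by (simp add: algebra_simps)
  qed (use triangular det in blast)
qed

abbreviation unit_square :: "(real \<times> real) set" where
  "unit_square \<equiv> cbox (0, 0) (1, 1)"

lemma lattice_map_inj:
  assumes "a * d - b * c \<noteq> 0"
  shows "inj (lattice_map a b c d)"
proof (rule injI)
  fix z w assume "lattice_map a b c d z = lattice_map a b c d w"
  then have e1: "(fst z - fst w) * a + (snd z - snd w) * c = 0"
    and e2: "(fst z - fst w) * b + (snd z - snd w) * d = 0"
    by (auto simp: lattice_map_def algebra_simps)
  have "(fst z - fst w) * (a * d - b * c) = d * ((fst z - fst w) * a + (snd z - snd w) * c)
          - c * ((fst z - fst w) * b + (snd z - snd w) * d)"
    and "(snd z - snd w) * (a * d - b * c) = a * ((fst z - fst w) * b + (snd z - snd w) * d)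
          - b * ((fst z - fst w) * a + (snd z - snd w) * c)"
    by (simp_all add: algebra_simps)
  then have "(fst z - fst w) * (a * d - b * c) = 0" "(snd z - snd w) * (a * d - b * c) = 0"
    unfolding e1 e2 by simp_all
  with assms show "z = w" by (simp add: prod_eq_iff)
qed

lemma compact_lattice_image: "compact (lattice_map a b c d ` unit_square)"
  by (intro compact_continuous_image compact_cbox) (simp add: lattice_map_def continuous_intros)

lemma integrable_on_compact:
  fixes f :: "real \<times> real \<Rightarrow> real"
  assumes "compact S" "continuous_on S f"
  shows "f integrable_on S"
proof -
  have "(\<lambda>x. indicator S x *\<^sub>R f x) integrable_on UNIV"
    using borel_integrable_compact[OF assms] by (rule integrable_on_lborel)
  moreover have "(\<lambda>x. indicator S x *\<^sub>R f x) = (\<lambda>x. if x \<in> S then f x else 0)"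
    by (auto simp: indicator_def)
  ultimately show ?thesis using integrable_restrict_UNIV[of S f] by simp
qed

lemma integral_lattice_image_nonneg:
  fixes G :: "real \<times> real \<Rightarrow> real"
  assumes det: "a * d - b * c \<noteq> 0" and G: "continuous_on UNIV G" "\<And>z. 0 \<le> G z"
  shows "integral (lattice_map a b c d ` unit_square) G
         = \<bar>a * d - b * c\<bar> * integral unit_square (\<lambda>z. G (lattice_map a b c d z))"
proof -
  let ?L = "lattice_map a b c d" and ?\<delta> = "\<bar>a * d - b * c\<bar>"
  have GL: "continuous_on unit_square (\<lambda>z. G (?L z))"
    by (rule continuous_on_compose2[OF G(1)]) (auto simp: lattice_map_def intro!: continuous_intros)
  have GL_int: "ennreal (integral unit_square (\<lambda>z. G (?L z)))
      = (\<integral>\<^sup>+z. ennreal (G (?L z)) * indicator unit_square z \<partial>lborel)"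
    using nn_integral_has_integral_lebesgue'[OF G(2) integrable_integral[OF integrable_continuous[OF GL]]]
    by simp
  have G_int: "G integrable_on ?L ` unit_square"
    by (rule integrable_on_compact[OF compact_lattice_image continuous_on_subset[OF G(1)]]) simp
  have "G \<in> borel_measurable borel" using G(1) by (rule borel_measurable_continuous_onI)
  moreover have "?L ` unit_square \<in> sets borel"
    using compact_lattice_image by (simp add: compact_imp_closed borel_closed)
  ultimately have "(\<lambda>x. ennreal (G x) * indicator (?L ` unit_square) x) \<in> borel_measurable borel"
    by measurable
  then have substitution:
    "(\<integral>\<^sup>+z. (\<lambda>x. ennreal (G x) * indicator (?L ` unit_square) x) (?L z) \<partial>lborel) * ennreal ?\<delta>
     = (\<integral>\<^sup>+x. ennreal (G x) * indicator (?L ` unit_square) x \<partial>lborel)"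
    using lborel_substitution_lattice_map[OF det] unfolding lborel_substitution_def by blast
  have "ennreal (integral (?L ` unit_square) G)
      = (\<integral>\<^sup>+x. ennreal (G x) * indicator (?L ` unit_square) x \<partial>lborel)"
    using nn_integral_has_integral_lebesgue'[OF G(2) integrable_integral[OF G_int]] by simp
  also have "\<dots> = (\<integral>\<^sup>+z. (\<lambda>x. ennreal (G x) * indicator (?L ` unit_square) x) (?L z) \<partial>lborel)
                     * ennreal ?\<delta>"
    by (rule substitution[symmetric])
  also have "\<dots> = (\<integral>\<^sup>+z. ennreal (G (?L z)) * indicator unit_square z \<partial>lborel) * ennreal ?\<delta>"
    using inj_image_mem_iff[OF lattice_map_inj[OF det]] by (simp add: indicator_def)
  also have "\<dots> = ennreal (integral unit_square (\<lambda>z. G (?L z)) * ?\<delta>)"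
    by (simp add: GL_int ennreal_mult'')
  finally have "ennreal (integral (?L ` unit_square) G) = ennreal (?\<delta> * integral unit_square (\<lambda>z. G (?L z)))"
    by (simp add: mult.commute)
  moreover have "0 \<le> integral (?L ` unit_square) G"
    using G(2) by (simp add: integral_nonneg[OF G_int])
  moreover have "0 \<le> integral unit_square (\<lambda>z. G (?L z))"
    using G(2) by (simp add: integral_nonneg[OF integrable_continuous[OF GL]])
  ultimately show ?thesis by simp
qed

lemma integral_lattice_image:
  fixes G :: "real \<times> real \<Rightarrow> real"
  assumes det: "a * d - b * c \<noteq> 0" and G: "continuous_on UNIV G"
  shows "integral (lattice_map a b c d ` unit_square) G
         = \<bar>a * d - b * c\<bar> * integral unit_square (\<lambda>z. G (lattice_map a b c d z))"
proof -
  let ?L = "lattice_map a b c d"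
  define P N where "P z = max (G z) 0" and "N z = max (- G z) 0" for z
  have PN: "continuous_on UNIV P" "continuous_on UNIV N"
    using G by (auto simp: P_def N_def intro!: continuous_intros)
  have PN_L: "continuous_on unit_square (\<lambda>z. P (?L z))" "continuous_on unit_square (\<lambda>z. N (?L z))"
    by (auto simp: lattice_map_def intro!: continuous_on_compose2[OF PN(1)] continuous_on_compose2[OF PN(2)]
          continuous_intros)
  have G_PN: "G = (\<lambda>z. P z - N z)" by (auto simp: P_def N_def fun_eq_iff)
  have "integral (?L ` unit_square) G = integral (?L ` unit_square) P - integral (?L ` unit_square) N"
    unfolding G_PN
    by (intro integral_diff integrable_on_compact compact_lattice_image continuous_on_subset[OF PN(1)]
        continuous_on_subset[OF PN(2)]) auto
  also have "\<dots> = \<bar>a * d - b * c\<bar> * (integral unit_square (\<lambda>z. P (?L z)) - integral unit_square (\<lambda>z. N (?L z)))"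
    using integral_lattice_image_nonneg[OF det PN(1)] integral_lattice_image_nonneg[OF det PN(2)]
    by (simp add: P_def N_def right_diff_distrib)
  also have "\<dots> = \<bar>a * d - b * c\<bar> * integral unit_square (\<lambda>z. G (?L z))"
    unfolding G_PN by (simp add: integral_diff integrable_continuous PN_L)
  finally show ?thesis .
qed

definition cell_mean :: "real \<Rightarrow> real \<Rightarrow> real \<Rightarrow> real \<Rightarrow> (real \<Rightarrow> real \<Rightarrow> real) \<Rightarrow> real" where
  "cell_mean a b c d g = integral unit_square (\<lambda>z. g (fst z * a + snd z * c) (fst z * b + snd z * d))"

lemma fund_domain_eq_lattice_image: "fund_domain a b c d = lattice_map a b c d ` unit_square"
  by (fastforce simp: fund_domain_def lattice_map_def cbox_Pair_eq image_def)

lemma avg_eq_cell_mean: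
  assumes det: "a * d - b * c \<noteq> 0" and g: "continuous2 g"
  shows "avg a b c d g = cell_mean a b c d g"
proof -
  have "measure lebesgue (fund_domain a b c d) = integral (lattice_map a b c d ` unit_square) (\<lambda>z. 1::real)"
    unfolding fund_domain_eq_lattice_image
    by (rule lmeasure_integral[OF lmeasurable_compact[OF compact_lattice_image]])
  also have "\<dots> = \<bar>a * d - b * c\<bar>"
    using integral_lattice_image[OF det, of "\<lambda>z. 1"] by (simp add: content_Pair)
  finally have "measure lebesgue (fund_domain a b c d) = \<bar>a * d - b * c\<bar>" .
  moreover have "integral (fund_domain a b c d) (\<lambda>z. g (fst z) (snd z)) = \<bar>a * d - b * c\<bar> * cell_mean a b c d g"
    using integral_lattice_image[OF det g[unfolded continuous2_def]]
    by (simp add: fund_domain_eq_lattice_image cell_mean_def lattice_map_def)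
  ultimately show ?thesis using det by (simp add: avg_def)
qed

lemma continuous_on_cell:
  assumes "continuous2 g"
  shows "continuous_on S (\<lambda>z. g (fst z * a + snd z * c) (fst z * b + snd z * d))"
proof -
  have "continuous_on UNIV (\<lambda>z. g (fst (lattice_map a b c d z)) (snd (lattice_map a b c d z)))"
    by (rule continuous_on_compose2[OF assms[unfolded continuous2_def]])
      (auto simp: lattice_map_def intro!: continuous_intros)
  then show ?thesis by (auto simp: lattice_map_def intro: continuous_on_subset)
qed

lemma cell_mean_diff:
  "continuous2 f \<Longrightarrow> continuous2 g \<Longrightarrow> cell_mean a b c d (\<lambda>x y. f x y - g x y) = cell_mean a b c d f - cell_mean a b c d g"
  unfolding cell_mean_def by (simp add: integral_diff integrable_continuous continuous_on_cell)

lemma cell_mean_cmult: "cell_mean a b c d (\<lambda>x y. k * f x y) = k * cell_mean a b c d f"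
  unfolding cell_mean_def by (rule integral_mult_right)

lemma cell_mean_const: "cell_mean a b c d (\<lambda>x y. k) = k"
  unfolding cell_mean_def by (simp add: content_Pair)

section \<open>Periodic functions\<close>

lemma periodic_int_multiple:
  fixes h :: "real \<Rightarrow> real \<Rightarrow> real"
  assumes per: "\<And>x y. h (x + p) (y + q) = h x y"
  shows "h (x + of_int m * p) (y + of_int m * q) = h x y"
proof -
  have nat: "h (x + real n * p) (y + real n * q) = h x y" for n x y
  proof (induction n arbitrary: x y)
    case (Suc n)
    have "h (x + real (Suc n) * p) (y + real (Suc n) * q) = h ((x + real n * p) + p) ((y + real n * q) + q)"
      by (simp add: algebra_simps)
    with Suc per show ?case by simp
  qed simp
  show ?thesis
  proof (cases "m \<ge> 0")
    case True
    then show ?thesis using nat[where n="nat m"] by simp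
  next
    case False
    then show ?thesis using nat[where n="nat (- m)" and x="x + of_int m * p" and y="y + of_int m * q"] by simp
  qed
qed

lemma gamma_periodic_lattice_shift:
  assumes "gamma_periodic a b c d h"
  shows "h (x + of_int m * a + of_int n * c) (y + of_int m * b + of_int n * d) = h x y"
  using assms periodic_int_multiple[of h c d "x + of_int m * a" n "y + of_int m * b"]
    periodic_int_multiple[of h a b x m y]
  by (simp add: gamma_periodic_def)

lemma lattice_cell_cover:
  assumes det: "a * d - b * c \<noteq> 0"
  obtains s t :: real and m n :: int where "0 \<le> s" "s \<le> 1" "0 \<le> t" "t \<le> 1"
    "x = (s * a + t * c) + of_int m * a + of_int n * c"
    "y = (s * b + t * d) + of_int m * b + of_int n * d"
proof -
  define S where "S = (x * d - y * c) / (a * d - b * c)"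
  define T where "T = (y * a - x * b) / (a * d - b * c)"
  have "S * a + T * c = x * (a * d - b * c) / (a * d - b * c)"
    and "S * b + T * d = y * (a * d - b * c) / (a * d - b * c)"
    by (simp_all add: S_def T_def add_divide_distrib[symmetric] algebra_simps)
  then have "x = S * a + T * c" "y = S * b + T * d" using det by simp_all
  moreover have "0 \<le> S - \<lfloor>S\<rfloor>" "S - \<lfloor>S\<rfloor> \<le> 1" "0 \<le> T - \<lfloor>T\<rfloor>" "T - \<lfloor>T\<rfloor> \<le> 1"
    by linarith+
  ultimately show ?thesis
    by (intro that[of "S - \<lfloor>S\<rfloor>" "T - \<lfloor>T\<rfloor>" "\<lfloor>S\<rfloor>" "\<lfloor>T\<rfloor>"]) (simp_all add: algebra_simps)
qed

text \<open>A continuous nonnegative function vanishing in mean on the unit square vanishes there,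
  and the square covers the plane up to lattice translations.\<close>

lemma periodic_nonneg_cell_mean_zero:
  assumes det: "a * d - b * c \<noteq> 0" and h: "gamma_periodic a b c d h" "continuous2 h"
    and nonneg: "\<And>x y. 0 \<le> h x y" and mean: "cell_mean a b c d h = 0"
  shows "h x y = 0"
proof -
  let ?H = "\<lambda>z::real \<times> real. h (fst z * a + snd z * c) (fst z * b + snd z * d)"
  have H: "continuous_on unit_square ?H" by (rule continuous_on_cell[OF h(2)])
  have integral: "(?H has_integral 0) unit_square"
    using mean integrable_integral[OF integrable_continuous[OF H]] by (simp add: cell_mean_def)
  have box: "box (0::real, 0::real) (1, 1) \<noteq> {}"
    by (auto simp: box_ne_empty Basis_prod_def)
  have zero: "?H (s, t) = 0" if "0 \<le> s" "s \<le> 1" "0 \<le> t" "t \<le> 1" for s t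
    by (rule has_integral_0_cbox_imp_0[OF H _ integral box]) (use nonneg that in \<open>auto simp: cbox_Pair_eq\<close>)
  obtain s t m n where st: "0 \<le> s" "s \<le> 1" "0 \<le> t" "t \<le> 1"
    and xy: "x = (s * a + t * c) + of_int m * a + of_int n * c"
      "y = (s * b + t * d) + of_int m * b + of_int n * d"
    using lattice_cell_cover[OF det] .
  have "h x y = h (s * a + t * c) (s * b + t * d)"
    unfolding xy by (rule gamma_periodic_lattice_shift[OF h(1)])
  also have "\<dots> = 0" using zero[OF st] by simp
  finally show ?thesis .
qed

lemma C1_partials_along_fst:
  assumes "C1_partials g gx gy"
  shows "((\<lambda>s. g (s * a + t * c) (s * b + t * d)) has_vector_derivative
           (a * gx (s * a + t * c) (s * b + t * d) + b * gy (s * a + t * c) (s * b + t * d))) (at s within X)"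
proof -
  let ?p = "(s * a + t * c, s * b + t * d)"
  have line: "((\<lambda>s. (s * a + t * c, s * b + t * d)) has_derivative (\<lambda>h. (h * a, h * b))) (at s within X)"
    by (auto intro!: derivative_eq_intros)
  have "((\<lambda>z::real \<times> real. g (fst z) (snd z)) has_derivative
          (\<lambda>h. gx (fst ?p) (snd ?p) * fst h + gy (fst ?p) (snd ?p) * snd h)) (at ?p within (\<lambda>s. (s * a + t * c, s * b + t * d)) ` X)"
    using assms by (auto simp: C1_partials_def intro: has_derivative_at_withinI)
  from has_derivative_in_compose[OF line this]
  have "((\<lambda>s. g (s * a + t * c) (s * b + t * d)) has_derivative
          (\<lambda>h. gx (fst ?p) (snd ?p) * (h * a) + gy (fst ?p) (snd ?p) * (h * b))) (at s within X)"
    by (simp add: o_def)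
  then show ?thesis unfolding has_vector_derivative_def
    by (rule has_derivative_eq_rhs) (auto simp: fun_eq_iff algebra_simps)
qed

lemma C1_partials_along_snd:
  assumes "C1_partials g gx gy"
  shows "((\<lambda>t. g (s * a + t * c) (s * b + t * d)) has_vector_derivative
           (c * gx (s * a + t * c) (s * b + t * d) + d * gy (s * a + t * c) (s * b + t * d))) (at t within X)"
proof -
  let ?p = "(s * a + t * c, s * b + t * d)"
  have line: "((\<lambda>t. (s * a + t * c, s * b + t * d)) has_derivative (\<lambda>h. (h * c, h * d))) (at t within X)"
    by (auto intro!: derivative_eq_intros)
  have "((\<lambda>z::real \<times> real. g (fst z) (snd z)) has_derivative
          (\<lambda>h. gx (fst ?p) (snd ?p) * fst h + gy (fst ?p) (snd ?p) * snd h)) (at ?p within (\<lambda>t. (s * a + t * c, s * b + t * d)) ` X)"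
    using assms by (auto simp: C1_partials_def intro: has_derivative_at_withinI)
  from has_derivative_in_compose[OF line this]
  have "((\<lambda>t. g (s * a + t * c) (s * b + t * d)) has_derivative
          (\<lambda>h. gx (fst ?p) (snd ?p) * (h * c) + gy (fst ?p) (snd ?p) * (h * d))) (at t within X)"
    by (simp add: o_def)
  then show ?thesis unfolding has_vector_derivative_def
    by (rule has_derivative_eq_rhs) (auto simp: fun_eq_iff algebra_simps)
qed

text \<open>Fubini and the fundamental theorem of calculus along the two lattice directions.\<close>

lemma cell_mean_lattice_derivatives:
  assumes per: "gamma_periodic a b c d g" and g: "C1_partials g gx gy"
  shows "cell_mean a b c d (\<lambda>x y. a * gx x y + b * gy x y) = 0"
    and "cell_mean a b c d (\<lambda>x y. c * gx x y + d * gy x y) = 0"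
proof -
  have "continuous2 gx" "continuous2 gy" using g by (auto simp: C1_partials_def)
  then have c1: "continuous2 (\<lambda>x y. a * gx x y + b * gy x y)"
    and c2: "continuous2 (\<lambda>x y. c * gx x y + d * gy x y)"
    by (auto simp: continuous2_def intro!: continuous_intros)
  let ?F1 = "\<lambda>s t. a * gx (s * a + t * c) (s * b + t * d) + b * gy (s * a + t * c) (s * b + t * d)"
  let ?F2 = "\<lambda>s t. c * gx (s * a + t * c) (s * b + t * d) + d * gy (s * a + t * c) (s * b + t * d)"
  have F1: "continuous_on unit_square (\<lambda>(s, t). ?F1 s t)"
    and F2: "continuous_on unit_square (\<lambda>(s, t). ?F2 s t)"
    using continuous_on_cell[OF c1] continuous_on_cell[OF c2] by (simp_all add: case_prod_unfold)
  have "integral {0..1} (\<lambda>s. ?F1 s t) = 0" for t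
  proof -
    have "((\<lambda>s. ?F1 s t) has_integral (g (1 * a + t * c) (1 * b + t * d) - g (0 * a + t * c) (0 * b + t * d))) {0..1}"
      by (rule fundamental_theorem_of_calculus) (auto intro!: C1_partials_along_fst[OF g])
    moreover have "g (1 * a + t * c) (1 * b + t * d) = g (0 * a + t * c) (0 * b + t * d)"
      using per unfolding gamma_periodic_def by (metis add.commute mult_1 mult_zero_left add_0)
    ultimately show ?thesis by (simp add: integral_unique)
  qed
  then have "integral (cbox 0 1) (\<lambda>t. integral (cbox 0 1) (\<lambda>s. ?F1 s t)) = 0" by simp
  then show "cell_mean a b c d (\<lambda>x y. a * gx x y + b * gy x y) = 0"
    using integral_prod_continuous[OF F1] integral_swap_continuous[of 0 0 1 1 ?F1] F1
    by (simp add: cell_mean_def case_prod_unfold)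
  have "integral {0..1} (\<lambda>t. ?F2 s t) = 0" for s
  proof -
    have "((\<lambda>t. ?F2 s t) has_integral (g (s * a + 1 * c) (s * b + 1 * d) - g (s * a + 0 * c) (s * b + 0 * d))) {0..1}"
      by (rule fundamental_theorem_of_calculus) (auto intro!: C1_partials_along_snd[OF g])
    moreover have "g (s * a + 1 * c) (s * b + 1 * d) = g (s * a + 0 * c) (s * b + 0 * d)"
      using per unfolding gamma_periodic_def by simp
    ultimately show ?thesis by (simp add: integral_unique)
  qed
  then show "cell_mean a b c d (\<lambda>x y. c * gx x y + d * gy x y) = 0"
    using integral_prod_continuous[OF F2] by (simp add: cell_mean_def case_prod_unfold)
qed

lemma cell_mean_partials_zero:
  assumes det: "a * d - b * c \<noteq> 0" and per: "gamma_periodic a b c d g" and g: "smooth2 g"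
  shows "cell_mean a b c d (dx g) = 0" and "cell_mean a b c d (dy g) = 0"
proof -
  have gx: "continuous2 (dx g)" and gy: "continuous2 (dy g)"
    using g by (simp_all add: smooth2_continuous2 smooth2_dx smooth2_dy)
  note lattice = cell_mean_lattice_derivatives[OF per smooth2_C1_partials[OF g]]
  have "(a * d - b * c) * cell_mean a b c d (dx g)
      = cell_mean a b c d (\<lambda>x y. d * (a * dx g x y + b * dy g x y) - b * (c * dx g x y + d * dy g x y))"
    unfolding cell_mean_cmult[symmetric]
    by (rule arg_cong[where f = "cell_mean a b c d"]) (simp add: fun_eq_iff algebra_simps)
  also have "\<dots> = 0"
    using lattice gx gy
    by (simp add: cell_mean_diff cell_mean_cmult continuous2_add continuous2_mult continuous2_const)
  finally show "cell_mean a b c d (dx g) = 0" using det by simp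
  have "(a * d - b * c) * cell_mean a b c d (dy g)
      = cell_mean a b c d (\<lambda>x y. a * (c * dx g x y + d * dy g x y) - c * (a * dx g x y + b * dy g x y))"
    unfolding cell_mean_cmult[symmetric]
    by (rule arg_cong[where f = "cell_mean a b c d"]) (simp add: fun_eq_iff algebra_simps)
  also have "\<dots> = 0"
    using lattice gx gy
    by (simp add: cell_mean_diff cell_mean_cmult continuous2_add continuous2_mult continuous2_const)
  finally show "cell_mean a b c d (dy g) = 0" using det by simp
qed

lemma periodic_partials:
  assumes per: "\<And>x y. g (x + p) (y + q) = g x y" and g: "smooth2 g"
  shows "dx g (x + p) (y + q) = dx g x y" and "dy g (x + p) (y + q) = dy g x y"
proof -
  have "(\<lambda>t. g t (y + q)) = (\<lambda>t. g (t - p) y)" and "(\<lambda>t. g (x + p) t) = (\<lambda>t. g x (t - q))"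
    using per[of "_ - p" y] per[of x "_ - q"] by auto
  moreover have "((\<lambda>t. g (t - p) y) has_real_derivative dx g x y * 1) (at (x + p))"
    by (rule DERIV_chain2[of "\<lambda>t. g t y"])
      (use C1_partials_DERIV_x[OF smooth2_C1_partials[OF g]] in \<open>auto intro!: derivative_eq_intros\<close>)
  moreover have "((\<lambda>t. g x (t - q)) has_real_derivative dy g x y * 1) (at (y + q))"
    by (rule DERIV_chain2[of "\<lambda>t. g x t"])
      (use C1_partials_DERIV_y[OF smooth2_C1_partials[OF g]] in \<open>auto intro!: derivative_eq_intros\<close>)
  ultimately show "dx g (x + p) (y + q) = dx g x y" and "dy g (x + p) (y + q) = dy g x y"
    by (simp_all add: dx_def dy_def DERIV_imp_deriv)
qed

lemma gamma_periodic_dx: "gamma_periodic a b c d g \<Longrightarrow> smooth2 g \<Longrightarrow> gamma_periodic a b c d (dx g)"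
  and gamma_periodic_dy: "gamma_periodic a b c d g \<Longrightarrow> smooth2 g \<Longrightarrow> gamma_periodic a b c d (dy g)"
  unfolding gamma_periodic_def using periodic_partials by metis+

text \<open>Liouville for periodic Cauchy-Riemann pairs: the Dirichlet energy of u is a sum of partial
  derivatives of periodic functions, hence has mean zero.\<close>

lemma periodic_cauchy_riemann_vanish:
  assumes det: "a * d - b * c \<noteq> 0"
    and u: "smooth2 u" "gamma_periodic a b c d u" "cell_mean a b c d u = 0"
    and v: "smooth2 v" "gamma_periodic a b c d v" "cell_mean a b c d v = 0"
    and cr: "\<And>x y. dx u x y = - dy v x y" "\<And>x y. dy u x y = dx v x y"
  shows "u x y = 0 \<and> v x y = 0"
proof -
  define E where "E x y = dx u x y * dx u x y + dy u x y * dy u x y" for x y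
  have E_eq: "E = (\<lambda>x y. dy (\<lambda>x y. u x y * dx v x y) x y - dx (\<lambda>x y. u x y * dy v x y) x y)"
    using smooth2_dx_dy_commute[OF v(1)]
    by (simp add: fun_eq_iff E_def dx_mult dy_mult smooth2_dx smooth2_dy u v cr algebra_simps)
  have prod_per: "gamma_periodic a b c d (\<lambda>x y. u x y * dx v x y)"
    "gamma_periodic a b c d (\<lambda>x y. u x y * dy v x y)"
    using u(2) gamma_periodic_dx[OF v(2,1)] gamma_periodic_dy[OF v(2,1)]
    by (simp_all add: gamma_periodic_def)
  have prod_smooth: "smooth2 (\<lambda>x y. u x y * dx v x y)" "smooth2 (\<lambda>x y. u x y * dy v x y)"
    using u v by (simp_all add: smooth2_mult smooth2_dx smooth2_dy)
  have E_mean: "cell_mean a b c d E = 0"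
    unfolding E_eq
    using cell_mean_partials_zero[OF det prod_per(1) prod_smooth(1)]
      cell_mean_partials_zero[OF det prod_per(2) prod_smooth(2)]
    by (simp add: cell_mean_diff smooth2_continuous2 smooth2_dx smooth2_dy prod_smooth)
  have E_per: "gamma_periodic a b c d E"
    using gamma_periodic_dx[OF u(2,1)] gamma_periodic_dy[OF u(2,1)]
    by (simp add: E_def gamma_periodic_def)
  have E_cont: "continuous2 E"
    unfolding E_def using u(1)
    by (simp add: continuous2_add continuous2_mult smooth2_continuous2 smooth2_dx smooth2_dy)
  have "E x y = 0" for x y
    by (rule periodic_nonneg_cell_mean_zero[OF det E_per E_cont _ E_mean]) (simp add: E_def)
  then have ux: "dx u x y = 0" and uy: "dy u x y = 0" for x y
    by (auto simp: E_def add_nonneg_eq_0_iff)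
  have vx: "dx v x y = 0" and vy: "dy v x y = 0" for x y
    using ux uy cr by (metis neg_equal_0_iff_equal)+
  have "u = (\<lambda>x y. u 0 0)" and "v = (\<lambda>x y. v 0 0)"
    using constant_if_partials_vanish[OF u(1) ux uy] constant_if_partials_vanish[OF v(1) vx vy]
    by (simp_all add: fun_eq_iff)
  then show ?thesis using u(3) v(3) cell_mean_const by metis
qed

section \<open>The Killing equations\<close>

lemma sum_atMost_4: "(\<Sum>i\<le>(4::nat). g i) = g 0 + g 1 + g 2 + g 3 + (g 4 :: real)"
  by (simp add: eval_nat_numeral)

lemma poisson_unit_momentum:
  fixes \<Lambda> :: "real \<Rightarrow> real \<Rightarrow> real" and A :: "nat \<Rightarrow> real \<Rightarrow> real \<Rightarrow> real"
  assumes L0: "\<Lambda> x y \<noteq> 0" and sL: "smooth2 \<Lambda>" and sA: "\<And>i. i \<le> 4 \<Longrightarrow> smooth2 (A i)"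
  defines "L \<equiv> \<Lambda> x y" and "Lx \<equiv> dx \<Lambda> x y" and "Ly \<equiv> dy \<Lambda> x y"
    and "a \<equiv> \<lambda>i. A i x y" and "ax \<equiv> \<lambda>i. dx (A i) x y" and "ay \<equiv> \<lambda>i. dy (A i) x y"
  shows "-2 * L\<^sup>2 * poisson (\<lambda>x y p1 p2. (p1\<^sup>2 + p2\<^sup>2) / (2 * \<Lambda> x y))
            (\<lambda>x y p1 p2. \<Sum>i\<le>4. A i x y * p1 ^ (4 - i) * p2 ^ i) x y 1 t
       = (1 + t\<^sup>2) * Lx * (4 * a 0 + 3 * a 1 * t + 2 * a 2 * t\<^sup>2 + a 3 * t ^ 3)
         + (1 + t\<^sup>2) * Ly * (a 1 + 2 * a 2 * t + 3 * a 3 * t\<^sup>2 + 4 * a 4 * t ^ 3)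
         + 2 * L * (ax 0 + ax 1 * t + ax 2 * t\<^sup>2 + ax 3 * t ^ 3 + ax 4 * t ^ 4)
         + 2 * L * t * (ay 0 + ay 1 * t + ay 2 * t\<^sup>2 + ay 3 * t ^ 3 + ay 4 * t ^ 4)"
proof -
  let ?H = "\<lambda>x y p1 p2. (p1\<^sup>2 + p2\<^sup>2) / (2 * \<Lambda> x y)"
  let ?F = "\<lambda>x y p1 p2. \<Sum>i\<le>4. A i x y * p1 ^ (4 - i) * p2 ^ (i::nat)"
  have sA': "smooth2 (A 0)" "smooth2 (A (Suc 0))" "smooth2 (A 2)" "smooth2 (A 3)" "smooth2 (A 4)"
    using sA by auto
  note DERIV_x = C1_partials_DERIV_x[OF smooth2_C1_partials] and
    DERIV_y = C1_partials_DERIV_y[OF smooth2_C1_partials]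
  have dHx: "deriv (\<lambda>s. ?H s y 1 t) x = - (1 + t\<^sup>2) * Lx / (2 * L\<^sup>2)"
    by (rule DERIV_imp_deriv) (use L0 in \<open>auto intro!: derivative_eq_intros DERIV_x[OF sL]
          simp: L_def Lx_def power2_eq_square field_simps\<close>)
  have dHy: "deriv (\<lambda>s. ?H x s 1 t) y = - (1 + t\<^sup>2) * Ly / (2 * L\<^sup>2)"
    by (rule DERIV_imp_deriv) (use L0 in \<open>auto intro!: derivative_eq_intros DERIV_y[OF sL]
          simp: L_def Ly_def power2_eq_square field_simps\<close>)
  have dHp1: "deriv (\<lambda>s. ?H x y s t) 1 = 1 / L"
    by (rule DERIV_imp_deriv) (use L0 in \<open>auto intro!: derivative_eq_intros
          simp: L_def power2_eq_square field_simps\<close>)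
  have dHp2: "deriv (\<lambda>s. ?H x y 1 s) t = t / L"
    by (rule DERIV_imp_deriv) (use L0 in \<open>auto intro!: derivative_eq_intros
          simp: L_def power2_eq_square field_simps\<close>)
  have dFx: "deriv (\<lambda>s. ?F s y 1 t) x = ax 0 + ax 1 * t + ax 2 * t\<^sup>2 + ax 3 * t ^ 3 + ax 4 * t ^ 4"
    unfolding sum_atMost_4
    by (rule DERIV_imp_deriv) (auto intro!: derivative_eq_intros DERIV_x sA' simp: ax_def power2_eq_square)
  have dFy: "deriv (\<lambda>s. ?F x s 1 t) y = ay 0 + ay 1 * t + ay 2 * t\<^sup>2 + ay 3 * t ^ 3 + ay 4 * t ^ 4"
    unfolding sum_atMost_4
    by (rule DERIV_imp_deriv) (auto intro!: derivative_eq_intros DERIV_y sA' simp: ay_def power2_eq_square)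
  have dFp1: "deriv (\<lambda>s. ?F x y s t) 1 = 4 * a 0 + 3 * a 1 * t + 2 * a 2 * t\<^sup>2 + a 3 * t ^ 3"
    unfolding sum_atMost_4
    by (rule DERIV_imp_deriv) (auto intro!: derivative_eq_intros simp: a_def eval_nat_numeral)
  have dFp2: "deriv (\<lambda>s. ?F x y 1 s) t = a 1 + 2 * a 2 * t + 3 * a 3 * t\<^sup>2 + 4 * a 4 * t ^ 3"
    unfolding sum_atMost_4
    by (rule DERIV_imp_deriv) (auto intro!: derivative_eq_intros simp: a_def eval_nat_numeral)
  have bracket: "poisson ?H ?F x y 1 t
      = (- (1 + t\<^sup>2) * Lx / (2 * L\<^sup>2)) * (4 * a 0 + 3 * a 1 * t + 2 * a 2 * t\<^sup>2 + a 3 * t ^ 3)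
        - (1 / L) * (ax 0 + ax 1 * t + ax 2 * t\<^sup>2 + ax 3 * t ^ 3 + ax 4 * t ^ 4)
        + (- (1 + t\<^sup>2) * Ly / (2 * L\<^sup>2)) * (a 1 + 2 * a 2 * t + 3 * a 3 * t\<^sup>2 + 4 * a 4 * t ^ 3)
        - (t / L) * (ay 0 + ay 1 * t + ay 2 * t\<^sup>2 + ay 3 * t ^ 3 + ay 4 * t ^ 4)"
    unfolding poisson_def dHx dHy dHp1 dHp2 dFx dFy dFp1 dFp2 ..
  show ?thesis
    unfolding bracket using L0 by (simp add: L_def field_simps power2_eq_square)
qed

text \<open>The Killing equations: the coefficients of 1, t, t^2, t^3 in the polynomial above.\<close>

lemma killing_equations:
  fixes \<Lambda> :: "real \<Rightarrow> real \<Rightarrow> real" and A :: "nat \<Rightarrow> real \<Rightarrow> real \<Rightarrow> real"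
  assumes L0: "\<Lambda> x y \<noteq> 0" and sL: "smooth2 \<Lambda>" and sA: "\<And>i. i \<le> 4 \<Longrightarrow> smooth2 (A i)"
    and first_integral: "\<And>p1 p2. poisson (\<lambda>x y p1 p2. (p1\<^sup>2 + p2\<^sup>2) / (2 * \<Lambda> x y))
        (\<lambda>x y p1 p2. \<Sum>i\<le>4. A i x y * p1 ^ (4 - i) * p2 ^ i) x y p1 p2 = 0"
  defines "L \<equiv> \<Lambda> x y" and "Lx \<equiv> dx \<Lambda> x y" and "Ly \<equiv> dy \<Lambda> x y"
    and "a \<equiv> \<lambda>i. A i x y" and "ax \<equiv> \<lambda>i. dx (A i) x y" and "ay \<equiv> \<lambda>i. dy (A i) x y"
  shows "4 * Lx * a 0 + Ly * a 1 + 2 * L * ax 0 = 0"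
    and "3 * Lx * a 1 + 2 * Ly * a 2 + 2 * L * (ax 1 + ay 0) = 0"
    and "2 * Lx * a 2 + 3 * Ly * a 3 + 4 * Lx * a 0 + Ly * a 1 + 2 * L * (ax 2 + ay 1) = 0"
    and "Lx * a 3 + 4 * Ly * a 4 + 3 * Lx * a 1 + 2 * Ly * a 2 + 2 * L * (ax 3 + ay 2) = 0"
proof -
  define e where "e = (\<lambda>k::nat. [4 * Lx * a 0 + Ly * a 1 + 2 * L * ax 0,
     3 * Lx * a 1 + 2 * Ly * a 2 + 2 * L * (ax 1 + ay 0),
     2 * Lx * a 2 + 3 * Ly * a 3 + 4 * Lx * a 0 + Ly * a 1 + 2 * L * (ax 2 + ay 1),
     Lx * a 3 + 4 * Ly * a 4 + 3 * Lx * a 1 + 2 * Ly * a 2 + 2 * L * (ax 3 + ay 2),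
     2 * Lx * a 2 + 3 * Ly * a 3 + 2 * L * (ax 4 + ay 3),
     Lx * a 3 + 4 * Ly * a 4 + 2 * L * ay 4] ! k)"
  have "(\<Sum>k\<le>5. e k * t ^ k) = 0" for t
    using poisson_unit_momentum[where \<Lambda> = \<Lambda> and A = A and x = x and y = y and t = t, OF L0 sL sA] first_integral[of 1 t]
    by (simp add: e_def L_def Lx_def Ly_def a_def ax_def ay_def eval_nat_numeral algebra_simps)
  then have "\<forall>k\<le>5. e k = 0" using polyfun_eq_0[of e 5] by blast
  from this[rule_format, of 0] this[rule_format, of 1] this[rule_format, of 2] this[rule_format, of 3]
  show "4 * Lx * a 0 + Ly * a 1 + 2 * L * ax 0 = 0"
    and "3 * Lx * a 1 + 2 * Ly * a 2 + 2 * L * (ax 1 + ay 0) = 0"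
    and "2 * Lx * a 2 + 3 * Ly * a 3 + 4 * Lx * a 0 + Ly * a 1 + 2 * L * (ax 2 + ay 1) = 0"
    and "Lx * a 3 + 4 * Ly * a 4 + 3 * Lx * a 1 + 2 * Ly * a 2 + 2 * L * (ax 3 + ay 2) = 0"
    by (simp_all add: e_def numeral_eq_Suc)
qed

section \<open>Quartic integrals with Kolokoltsov's relations\<close>

locale quartic_first_integral =
  fixes \<Lambda> :: "real \<Rightarrow> real \<Rightarrow> real" and A :: "nat \<Rightarrow> real \<Rightarrow> real \<Rightarrow> real" and c\<^sub>2 :: real
  assumes \<Lambda>_nonzero: "\<And>x y. \<Lambda> x y \<noteq> 0" and \<Lambda>_smooth: "smooth2 \<Lambda>"
    and A_smooth: "\<And>i. i \<le> 4 \<Longrightarrow> smooth2 (A i)"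
    and first_integral: "\<And>x y p1 p2. poisson
        (\<lambda>x y p1 p2. (p1\<^sup>2 + p2\<^sup>2) / (2 * \<Lambda> x y))
        (\<lambda>x y p1 p2. \<Sum>i\<le>4. A i x y * p1 ^ (4 - i) * p2 ^ i) x y p1 p2 = 0"
    and kolokoltsov_3: "A 3 = A 1"
    and kolokoltsov_4: "A 4 = (\<lambda>x y. c\<^sub>2 + A 2 x y - A 0 x y)"
begin

text \<open>The means of K11, K12, K22 over a lattice cell are the constants 2 a11, 2 a12, 2 a22 of the
  theorem.\<close>

definition K11 :: "real \<Rightarrow> real \<Rightarrow> real" where
  "K11 = (\<lambda>x y. (2 * c\<^sub>2 - 2 * A 0 x y + A 2 x y) * \<Lambda> x y)"

definition K12 :: "real \<Rightarrow> real \<Rightarrow> real" where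
  "K12 = (\<lambda>x y. A 1 x y * \<Lambda> x y)"

definition K22 :: "real \<Rightarrow> real \<Rightarrow> real" where
  "K22 = (\<lambda>x y. (2 * A 0 x y - A 2 x y) * \<Lambda> x y)"

lemma A_smooth': "smooth2 (A 0)" "smooth2 (A 1)" "smooth2 (A (Suc 0))" "smooth2 (A 2)"
  using A_smooth by auto

lemma smooth2_K: "smooth2 K11" "smooth2 K12" "smooth2 K22"
  unfolding K11_def K12_def K22_def by (simp_all add: smooth2_rules \<Lambda>_smooth A_smooth')

lemma K_trace: "K11 x y + K22 x y = 2 * c\<^sub>2 * \<Lambda> x y"
  by (simp add: K11_def K22_def algebra_simps)

lemmas killing = killing_equations[OF \<Lambda>_nonzero \<Lambda>_smooth A_smooth first_integral,
    unfolded kolokoltsov_3 kolokoltsov_4]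

lemma K_divergence_free:
  shows "dy K11 x y = dx K12 x y" and "dy K12 x y = dx K22 x y"
proof -
  have "dy K11 x y - dx K12 x y =
      (1/2) * (dx \<Lambda> x y * A 1 x y + 4 * dy \<Lambda> x y * (c\<^sub>2 + A 2 x y - A 0 x y) + 3 * dx \<Lambda> x y * A 1 x y
        + 2 * dy \<Lambda> x y * A 2 x y + 2 * \<Lambda> x y * (dx (A 1) x y + dy (A 2) x y))
      - (3 * dx \<Lambda> x y * A 1 x y + 2 * dy \<Lambda> x y * A 2 x y + 2 * \<Lambda> x y * (dx (A 1) x y + dy (A 0) x y))"
    unfolding K11_def K12_def by (simp add: partial_rules smooth2_rules \<Lambda>_smooth A_smooth' algebra_simps)
  with killing(2,4) show "dy K11 x y = dx K12 x y" by simp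
  have "dy K12 x y - dx K22 x y =
      (1/2) * (2 * dx \<Lambda> x y * A 2 x y + 3 * dy \<Lambda> x y * A 1 x y + 4 * dx \<Lambda> x y * A 0 x y
        + dy \<Lambda> x y * A 1 x y + 2 * \<Lambda> x y * (dx (A 2) x y + dy (A 1) x y))
      - (4 * dx \<Lambda> x y * A 0 x y + dy \<Lambda> x y * A 1 x y + 2 * \<Lambda> x y * dx (A 0) x y)"
    unfolding K12_def K22_def by (simp add: partial_rules smooth2_rules \<Lambda>_smooth A_smooth' algebra_simps)
  with killing(1,3) show "dy K12 x y = dx K22 x y" by simp
qed

lemma partials_A0_Lambda_sq:
  shows "dx (\<lambda>x y. A 0 x y * (\<Lambda> x y * \<Lambda> x y)) x y = - (1/2) * (dy \<Lambda> x y * K12 x y)"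
    and "dy (\<lambda>x y. A 0 x y * (\<Lambda> x y * \<Lambda> x y)) x y
         = (1/2) * (2 * dy \<Lambda> x y * K22 x y - dx \<Lambda> x y * K12 x y - 2 * \<Lambda> x y * dx K12 x y)"
proof -
  have "dx (\<lambda>x y. A 0 x y * (\<Lambda> x y * \<Lambda> x y)) x y + (1/2) * (dy \<Lambda> x y * K12 x y)
      = (\<Lambda> x y / 2) * (4 * dx \<Lambda> x y * A 0 x y + dy \<Lambda> x y * A 1 x y + 2 * \<Lambda> x y * dx (A 0) x y)"
    unfolding K12_def by (simp add: partial_rules smooth2_rules \<Lambda>_smooth A_smooth' algebra_simps)
  with killing(1) show "dx (\<lambda>x y. A 0 x y * (\<Lambda> x y * \<Lambda> x y)) x y = - (1/2) * (dy \<Lambda> x y * K12 x y)"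
    by simp
  have "dy (\<lambda>x y. A 0 x y * (\<Lambda> x y * \<Lambda> x y)) x y
        - (1/2) * (2 * dy \<Lambda> x y * K22 x y - dx \<Lambda> x y * K12 x y - 2 * \<Lambda> x y * dx K12 x y)
      = (\<Lambda> x y / 2) * (3 * dx \<Lambda> x y * A 1 x y + 2 * dy \<Lambda> x y * A 2 x y
          + 2 * \<Lambda> x y * (dx (A 1) x y + dy (A 0) x y))"
    unfolding K12_def K22_def by (simp add: partial_rules smooth2_rules \<Lambda>_smooth A_smooth' algebra_simps)
  with killing(2) show "dy (\<lambda>x y. A 0 x y * (\<Lambda> x y * \<Lambda> x y)) x y
         = (1/2) * (2 * dy \<Lambda> x y * K22 x y - dx \<Lambda> x y * K12 x y - 2 * \<Lambda> x y * dx K12 x y)"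
    by simp
qed

end

text \<open>Multiply by 2 c2 and replace every derivative of 2 c2 L by the corresponding derivative of
  the Laplacian.\<close>

lemma fourth_order_elimination:
  fixes c\<^sub>2 L Lx Ly Lxx Lxy Lyy a11 a12 a22 lxx lxy lyy lxxx lxxy lxyy lyyy lxxxx lxxxy lxxyy lxyyy lyyyy :: real
  assumes "2 * c\<^sub>2 * L = lxx + lyy + (2 * a11 + 2 * a22)"
    and "2 * c\<^sub>2 * Lx = lxxx + lxyy" and "2 * c\<^sub>2 * Ly = lxxy + lyyy"
    and "2 * c\<^sub>2 * Lxx = lxxxx + lxxyy" and "2 * c\<^sub>2 * Lxy = lxxxy + lxyyy" and "2 * c\<^sub>2 * Lyy = lxxyy + lyyyy"
    and mixed: "- (Lyy * (lxy + 2 * a12) + Ly * lxyy)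
         = 2 * (Lxy * (lyy + 2 * a22) + Ly * lxyy) - (Lxx * (lxy + 2 * a12) + Lx * lxxy)
           - 2 * (Lx * lxxy + L * lxxxy)"
  shows "lxy * (lyyyy - lxxxx) + 3 * (lyyy * lxyy - lxxy * lxxx) + 2 * (lyy * lxyyy - lxx * lxxxy)
       + 4 * a22 * lxyyy - 4 * a11 * lxxxy + 2 * a12 * (lyyyy - lxxxx) = 0"
proof -
  from mixed have "2 * c\<^sub>2 * (- (Lyy * (lxy + 2 * a12) + Ly * lxyy))
      = 2 * c\<^sub>2 * (2 * (Lxy * (lyy + 2 * a22) + Ly * lxyy) - (Lxx * (lxy + 2 * a12) + Lx * lxxy)
          - 2 * (Lx * lxxy + L * lxxxy))"
    by simp
  then have "- ((2 * c\<^sub>2 * Lyy) * (lxy + 2 * a12) + (2 * c\<^sub>2 * Ly) * lxyy)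
      = 2 * ((2 * c\<^sub>2 * Lxy) * (lyy + 2 * a22) + (2 * c\<^sub>2 * Ly) * lxyy)
        - ((2 * c\<^sub>2 * Lxx) * (lxy + 2 * a12) + (2 * c\<^sub>2 * Lx) * lxxy)
        - 2 * ((2 * c\<^sub>2 * Lx) * lxxy + (2 * c\<^sub>2 * L) * lxxxy)"
    by (simp add: algebra_simps)
  then show ?thesis unfolding assms(1-6) by (simp add: algebra_simps)
qed

locale periodic_quartic_first_integral = quartic_first_integral +
  fixes a b c d :: real and lam :: "real \<Rightarrow> real \<Rightarrow> real" and a11 a12 a22 :: real
  assumes lattice: "lattice_basis a b c d"
    and \<Lambda>_periodic: "gamma_periodic a b c d \<Lambda>"
    and A_periodic: "\<And>i. i \<le> 4 \<Longrightarrow> gamma_periodic a b c d (A i)"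
    and a11: "a11 = (1/2) * avg a b c d (\<lambda>x y. (2 * c\<^sub>2 - 2 * A 0 x y + A 2 x y) * \<Lambda> x y)"
    and a12: "a12 = (1/2) * avg a b c d (\<lambda>x y. A 1 x y * \<Lambda> x y)"
    and lam_smooth: "smooth2 lam" and lam_periodic: "gamma_periodic a b c d lam"
    and lam_poisson: "\<And>x y. dx (dx lam) x y + dy (dy lam) x y = 2 * c\<^sub>2 * \<Lambda> x y - 2 * a11 - 2 * a22"
begin

lemma lattice_det_nonzero: "a * d - b * c \<noteq> 0"
  using lattice by (simp add: lattice_basis_def)

lemma K_periodic: "gamma_periodic a b c d K11" "gamma_periodic a b c d K12" "gamma_periodic a b c d K22"
  using \<Lambda>_periodic A_periodic[of 0] A_periodic[of 1] A_periodic[of 2]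
  by (simp_all add: gamma_periodic_def K11_def K12_def K22_def)

lemma cell_mean_K: "a11 = (1/2) * cell_mean a b c d K11" "a12 = (1/2) * cell_mean a b c d K12"
  using avg_eq_cell_mean[OF lattice_det_nonzero smooth2_continuous2[OF smooth2_K(1)]]
    avg_eq_cell_mean[OF lattice_det_nonzero smooth2_continuous2[OF smooth2_K(2)]]
  by (simp_all add: a11 a12 K11_def K12_def)

lemma lam_partials_mean_zero:
  "cell_mean a b c d (dx (dx lam)) = 0" "cell_mean a b c d (dx (dy lam)) = 0"
  using cell_mean_partials_zero(1)[OF lattice_det_nonzero gamma_periodic_dx smooth2_dx]
    cell_mean_partials_zero(1)[OF lattice_det_nonzero gamma_periodic_dy smooth2_dy]
    lam_periodic lam_smooth
  by simp_all

text \<open>The deviation of K from the Hessian of lam is a periodic Cauchy-Riemann pair of mean zero.\<close>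

lemma K_eq_hessian:
  shows "K12 x y = dx (dy lam) x y + 2 * a12" and "K22 x y = dy (dy lam) x y + 2 * a22"
proof -
  note smooth = lam_smooth smooth2_K
  define u where "u = (\<lambda>x y. dx (dx lam) x y - (K11 x y - 2 * a11))"
  define v where "v = (\<lambda>x y. dx (dy lam) x y - (K12 x y - 2 * a12))"
  have u_alt: "u = (\<lambda>x y. (K22 x y - 2 * a22) - dy (dy lam) x y)"
    using lam_poisson K_trace by (auto simp: fun_eq_iff u_def algebra_simps)
  have uv_smooth: "smooth2 u" "smooth2 v"
    unfolding u_def v_def by (simp_all add: smooth2_rules smooth)
  have periodic: "gamma_periodic a b c d u" "gamma_periodic a b c d v"
    using K_periodic gamma_periodic_dx[OF gamma_periodic_dx[OF lam_periodic lam_smooth]]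
      gamma_periodic_dx[OF gamma_periodic_dy[OF lam_periodic lam_smooth]]
    by (simp_all add: u_def v_def gamma_periodic_def smooth2_rules lam_smooth)
  have mean: "cell_mean a b c d u = 0" "cell_mean a b c d v = 0"
    using lam_partials_mean_zero cell_mean_K smooth2_K
    by (simp_all add: u_def v_def cell_mean_diff cell_mean_const smooth2_continuous2 smooth2_rules
        continuous2_diff continuous2_const lam_smooth)
  have "dx u x y = - dy v x y" for x y
    using K_divergence_free(2)[of x y]
    by (simp add: u_alt v_def partial_rules smooth2_rules smooth smooth2_dx_dy_commute)
  moreover have "dy u x y = dx v x y" for x y
    using K_divergence_free(1)[of x y]
    by (simp add: u_def v_def partial_rules smooth2_rules smooth smooth2_dx_dy_commute)
  ultimately have "u x y = 0 \<and> v x y = 0"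
    using periodic_cauchy_riemann_vanish[OF lattice_det_nonzero
        uv_smooth(1) periodic(1) mean(1) uv_smooth(2) periodic(2) mean(2)]
    by blast
  then show "K12 x y = dx (dy lam) x y + 2 * a12" and "K22 x y = dy (dy lam) x y + 2 * a22"
    by (simp_all add: v_def u_alt)
qed

text \<open>Symmetry of the second derivatives of A 0 * \<Lambda>^2, whose gradient is given by
  partials_A0_Lambda_sq.\<close>

lemma mixed_partials_A0_Lambda_sq:
  "- (dy (dy \<Lambda>) x y * (dx (dy lam) x y + 2 * a12) + dy \<Lambda> x y * dx (dy (dy lam)) x y)
   = 2 * (dx (dy \<Lambda>) x y * (dy (dy lam) x y + 2 * a22) + dy \<Lambda> x y * dx (dy (dy lam)) x y)
     - (dx (dx \<Lambda>) x y * (dx (dy lam) x y + 2 * a12) + dx \<Lambda> x y * dx (dx (dy lam)) x y)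
     - 2 * (dx \<Lambda> x y * dx (dx (dy lam)) x y + \<Lambda> x y * dx (dx (dx (dy lam))) x y)"
proof -
  define b0 where "b0 = (\<lambda>x y. A 0 x y * (\<Lambda> x y * \<Lambda> x y))"
  have K12: "K12 = (\<lambda>x y. dx (dy lam) x y + 2 * a12)" and K22: "K22 = (\<lambda>x y. dy (dy lam) x y + 2 * a22)"
    using K_eq_hessian by (simp_all add: fun_eq_iff)
  have "dx b0 = (\<lambda>x y. - (1/2) * (dy \<Lambda> x y * (dx (dy lam) x y + 2 * a12)))"
    using partials_A0_Lambda_sq(1) by (simp add: fun_eq_iff b0_def K12)
  moreover have "dy b0 = (\<lambda>x y. (1/2) * (2 * dy \<Lambda> x y * (dy (dy lam) x y + 2 * a22)
      - dx \<Lambda> x y * (dx (dy lam) x y + 2 * a12) - 2 * \<Lambda> x y * dx (dx (dy lam)) x y))"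
    using partials_A0_Lambda_sq(2)
    by (simp add: fun_eq_iff b0_def K12 K22 partial_rules smooth2_rules lam_smooth)
  moreover have "dy (dx b0) = dx (dy b0)"
    unfolding b0_def by (simp add: smooth2_dx_dy_commute smooth2_rules \<Lambda>_smooth A_smooth')
  ultimately have "dy (\<lambda>x y. - (1/2) * (dy \<Lambda> x y * (dx (dy lam) x y + 2 * a12))) x y
      = dx (\<lambda>x y. (1/2) * (2 * dy \<Lambda> x y * (dy (dy lam) x y + 2 * a22)
         - dx \<Lambda> x y * (dx (dy lam) x y + 2 * a12) - 2 * \<Lambda> x y * dx (dx (dy lam)) x y)) x y"
    by simp
  then show ?thesis
    by (simp only: partial_rules smooth2_rules \<Lambda>_smooth lam_smooth smooth2_dx_dy_commute)
      (simp add: algebra_simps)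
qed

lemma lam_poisson_partials:
  shows "2 * c\<^sub>2 * dx \<Lambda> x y = dx (dx (dx lam)) x y + dx (dy (dy lam)) x y"
    and "2 * c\<^sub>2 * dy \<Lambda> x y = dx (dx (dy lam)) x y + dy (dy (dy lam)) x y"
    and "2 * c\<^sub>2 * dx (dx \<Lambda>) x y = dx (dx (dx (dx lam))) x y + dx (dx (dy (dy lam))) x y"
    and "2 * c\<^sub>2 * dx (dy \<Lambda>) x y = dx (dx (dx (dy lam))) x y + dx (dy (dy (dy lam))) x y"
    and "2 * c\<^sub>2 * dy (dy \<Lambda>) x y = dx (dx (dy (dy lam))) x y + dy (dy (dy (dy lam))) x y"
proof -
  have laplacian: "(\<lambda>x y. 2 * c\<^sub>2 * \<Lambda> x y) = (\<lambda>x y. dx (dx lam) x y + dy (dy lam) x y + (2 * a11 + 2 * a22))"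
    using lam_poisson by (simp add: fun_eq_iff)
  note rules = partial_rules smooth2_rules \<Lambda>_smooth lam_smooth smooth2_dx_dy_commute
  show "2 * c\<^sub>2 * dx \<Lambda> x y = dx (dx (dx lam)) x y + dx (dy (dy lam)) x y"
    using arg_cong[where f = "\<lambda>f. dx f x y", OF laplacian] by (simp add: rules)
  show "2 * c\<^sub>2 * dy \<Lambda> x y = dx (dx (dy lam)) x y + dy (dy (dy lam)) x y"
    using arg_cong[where f = "\<lambda>f. dy f x y", OF laplacian] by (simp add: rules)
  show "2 * c\<^sub>2 * dx (dx \<Lambda>) x y = dx (dx (dx (dx lam))) x y + dx (dx (dy (dy lam))) x y"
    using arg_cong[where f = "\<lambda>f. dx (dx f) x y", OF laplacian] by (simp add: rules)
  show "2 * c\<^sub>2 * dx (dy \<Lambda>) x y = dx (dx (dx (dy lam))) x y + dx (dy (dy (dy lam))) x y"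
    using arg_cong[where f = "\<lambda>f. dx (dy f) x y", OF laplacian] by (simp add: rules)
  show "2 * c\<^sub>2 * dy (dy \<Lambda>) x y = dx (dx (dy (dy lam))) x y + dy (dy (dy (dy lam))) x y"
    using arg_cong[where f = "\<lambda>f. dy (dy f) x y", OF laplacian] by (simp add: rules)
qed

theorem fourth_order_identity:
  "dx (dy lam) x y * (dy (dy (dy (dy lam))) x y - dx (dx (dx (dx lam))) x y)
   + 3 * (dy (dy (dy lam)) x y * dx (dy (dy lam)) x y - dx (dx (dy lam)) x y * dx (dx (dx lam)) x y)
   + 2 * (dy (dy lam) x y * dx (dy (dy (dy lam))) x y - dx (dx lam) x y * dx (dx (dx (dy lam))) x y)
   + 4 * a22 * dx (dy (dy (dy lam))) x y - 4 * a11 * dx (dx (dx (dy lam))) x y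
   + 2 * a12 * (dy (dy (dy (dy lam))) x y - dx (dx (dx (dx lam))) x y) = 0"
  using lam_poisson[of x y]
  by (intro fourth_order_elimination[OF _ lam_poisson_partials(1,2,3,4,5) mixed_partials_A0_Lambda_sq])
    simp
end

theorem theorem4:
  fixes a b c d c\<^sub>2 :: real
    and \<Lambda> lam :: "real \<Rightarrow> real \<Rightarrow> real"
    and A :: "nat \<Rightarrow> real \<Rightarrow> real \<Rightarrow> real"
  assumes lat: "lattice_basis a b c d"
    and \<Lambda>_pos: "\<And>x y. \<Lambda> x y > 0"
    and \<Lambda>_smooth: "smooth2 \<Lambda>" and \<Lambda>_per: "gamma_periodic a b c d \<Lambda>"
    and A_smooth: "\<And>i. i \<le> 4 \<Longrightarrow> smooth2 (A i)"
    and A_per: "\<And>i. i \<le> 4 \<Longrightarrow> gamma_periodic a b c d (A i)"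
    and integral: "\<And>x y p1 p2. poisson
        (\<lambda>x y p1 p2. (p1\<^sup>2 + p2\<^sup>2) / (2 * \<Lambda> x y))
        (\<lambda>x y p1 p2. \<Sum>i\<le>4. A i x y * p1 ^ (4 - i) * p2 ^ i) x y p1 p2 = 0"
    and kol1: "A 3 = A 1"
    and kol2: "A 4 = (\<lambda>x y. c\<^sub>2 + A 2 x y - A 0 x y)"
    and lam_smooth: "smooth2 lam" and lam_per: "gamma_periodic a b c d lam"
    and lam_eq: "\<And>x y. dx (dx lam) x y + dy (dy lam) x y =
        2 * c\<^sub>2 * \<Lambda> x y
        - 2 * ((1/2) * avg a b c d (\<lambda>x y. (2 * c\<^sub>2 - 2 * A 0 x y + A 2 x y) * \<Lambda> x y))
        - 2 * ((1/2) * avg a b c d (\<lambda>x y. (2 * A 0 x y - A 2 x y) * \<Lambda> x y))"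
  shows "let a11 = (1/2) * avg a b c d (\<lambda>x y. (2 * c\<^sub>2 - 2 * A 0 x y + A 2 x y) * \<Lambda> x y);
             a22 = (1/2) * avg a b c d (\<lambda>x y. (2 * A 0 x y - A 2 x y) * \<Lambda> x y);
             a12 = (1/2) * avg a b c d (\<lambda>x y. A 1 x y * \<Lambda> x y)
         in \<forall>x y.
           dx (dy lam) x y * (dy (dy (dy (dy lam))) x y - dx (dx (dx (dx lam))) x y)
         + 3 * (dy (dy (dy lam)) x y * dx (dy (dy lam)) x y - dx (dx (dy lam)) x y * dx (dx (dx lam)) x y)
         + 2 * (dy (dy lam) x y * dx (dy (dy (dy lam))) x y - dx (dx lam) x y * dx (dx (dx (dy lam))) x y)
         + 4 * a22 * dx (dy (dy (dy lam))) x y - 4 * a11 * dx (dx (dx (dy lam))) x y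
         + 2 * a12 * (dy (dy (dy (dy lam))) x y - dx (dx (dx (dx lam))) x y) = 0"
proof -
  interpret periodic_quartic_first_integral \<Lambda> A c\<^sub>2 a b c d lam
      "(1/2) * avg a b c d (\<lambda>x y. (2 * c\<^sub>2 - 2 * A 0 x y + A 2 x y) * \<Lambda> x y)"
      "(1/2) * avg a b c d (\<lambda>x y. A 1 x y * \<Lambda> x y)"
      "(1/2) * avg a b c d (\<lambda>x y. (2 * A 0 x y - A 2 x y) * \<Lambda> x y)"
    using assms less_imp_neq[OF \<Lambda>_pos]
    by unfold_locales (simp_all add: eq_commute[of 0])
  show ?thesis using fourth_order_identity by (simp add: Let_def)
qed

end
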